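(* Assume (SH). Let $x\in\operatorname{dom}f$, let $0<\varepsilon_t\le1$, $t\in T$, satisfy $\inf_{t\in T}\varepsilon_tf_t(x)>-\infty$, and let $\delta_t>0$, $t\in T$, satisfy $0<\inf_{t\in T}\delta_t\le\sup_{t\in T}\delta_t<+\infty$. Then \[ \mathrm{N}_{\operatorname{dom}f}(x)=\Big[\overline{\operatorname{co}}\Big(\bigcup_{t\in T}\partial_{\delta_t}(\varepsilon_tf_t)(x)\Big)\Big]_\infty . \]
   Context: $X$ is a real separated locally convex space with dual $X^*$ carrying the weak$^*$ topology. $T$ is a nonempty index set, $\{f_t: t\in T\}$ are proper convex lsc functions $X\to\mathbb{R}\cup\{+\infty\}$, $f:=\sup_{t\in T}f_t$. $\partial_\delta g(x)=\{x^*:\ g(y)\ge g(x)+\langle x^*,y-x\rangle-\delta\ \forall y\}$ if $g(x)\in\mathbb{R}$, $\delta\ge0$. $\overline{\operatorname{co}}$ is the weak$^*$-closed convex hull; $C_\infty$ is the recession cone of a nonempty closed convex set $C$; $\mathrm{N}_A(x)$ is the normal cone. (SH): $T$ is compact Hausdorff and $t\mapsto f_t(z)$ is upper semicontinuous on $T$ for each $z\in X$. *)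

theory Defs
  imports "HOL-Analysis.Analysis"
begin

definition lcs :: "'a::real_vector topology \<Rightarrow> bool" where
  "lcs \<tau> \<longleftrightarrow> topspace \<tau> = UNIV \<and> Hausdorff_space \<tau>
     \<and> continuous_map (prod_topology \<tau> \<tau>) \<tau> (\<lambda>(x, y). x + y)
     \<and> continuous_map (prod_topology euclideanreal \<tau>) \<tau> (\<lambda>(a, x). a *\<^sub>R x)
     \<and> (\<forall>U x. openin \<tau> U \<and> x \<in> U \<longrightarrow> (\<exists>V. openin \<tau> V \<and> convex V \<and> x \<in> V \<and> V \<subseteq> U))"

definition dual :: "'a::real_vector topology \<Rightarrow> ('a \<Rightarrow> real) set" where
  "dual \<tau> = {\<phi>. linear \<phi> \<and> continuous_map \<tau> euclideanreal \<phi>}"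

text \<open>Weak-star topology on the dual: topology of pointwise convergence
  (product topology on functions) restricted to the dual.\<close>
definition wstar :: "'a::real_vector topology \<Rightarrow> ('a \<Rightarrow> real) topology" where
  "wstar \<tau> = subtopology euclidean (dual \<tau>)"

definition fconvex :: "('a \<Rightarrow> real) set \<Rightarrow> bool" where
  "fconvex C \<longleftrightarrow> (\<forall>\<phi>\<in>C. \<forall>\<psi>\<in>C. \<forall>u::real. 0 \<le> u \<and> u \<le> 1 \<longrightarrow>
      (\<lambda>x. (1 - u) * \<phi> x + u * \<psi> x) \<in> C)"

definition fconv_hull :: "('a \<Rightarrow> real) set \<Rightarrow> ('a \<Rightarrow> real) set" where
  "fconv_hull A = \<Inter>{C. A \<subseteq> C \<and> fconvex C}"

definition wstar_clco :: "'a::real_vector topology \<Rightarrow> ('a \<Rightarrow> real) set \<Rightarrow> ('a \<Rightarrow> real) set" where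
  "wstar_clco \<tau> A = (wstar \<tau>) closure_of (fconv_hull A)"

definition rec_cone :: "('a \<Rightarrow> real) set \<Rightarrow> ('a \<Rightarrow> real) set" where
  "rec_cone C = {d. \<forall>c\<in>C. \<forall>l::real. l \<ge> 0 \<longrightarrow> (\<lambda>x. c x + l * d x) \<in> C}"

definition edom :: "('a \<Rightarrow> ereal) \<Rightarrow> 'a set" where
  "edom f = {x. f x < \<infinity>}"

definition normal_cone :: "'a::real_vector topology \<Rightarrow> 'a set \<Rightarrow> 'a \<Rightarrow> ('a \<Rightarrow> real) set" where
  "normal_cone \<tau> A x = {\<phi> \<in> dual \<tau>. \<forall>y\<in>A. \<phi> (y - x) \<le> 0}"

definition dsubdiff :: "'a::real_vector topology \<Rightarrow> real \<Rightarrow> ('a \<Rightarrow> ereal) \<Rightarrow> 'a \<Rightarrow> ('a \<Rightarrow> real) set" where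
  "dsubdiff \<tau> \<delta> g x = (if \<bar>g x\<bar> \<noteq> \<infinity> then
      {\<phi> \<in> dual \<tau>. \<forall>y. g y \<ge> g x + ereal (\<phi> (y - x) - \<delta>)} else {})"

definition econvex :: "('a::real_vector \<Rightarrow> ereal) \<Rightarrow> bool" where
  "econvex f \<longleftrightarrow> (\<forall>x y. \<forall>u::real. 0 \<le> u \<and> u \<le> 1 \<longrightarrow>
      f ((1 - u) *\<^sub>R x + u *\<^sub>R y) \<le> ereal (1 - u) * f x + ereal u * f y)"

definition eproper :: "('a \<Rightarrow> ereal) \<Rightarrow> bool" where
  "eproper f \<longleftrightarrow> (\<forall>x. f x \<noteq> -\<infinity>) \<and> (\<exists>x. f x \<noteq> \<infinity>)"

definition elsc :: "'a topology \<Rightarrow> ('a \<Rightarrow> ereal) \<Rightarrow> bool" where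
  "elsc \<tau> f \<longleftrightarrow> (\<forall>c. closedin \<tau> {x \<in> topspace \<tau>. f x \<le> c})"

definition eusc_on :: "'i topology \<Rightarrow> ('i \<Rightarrow> ereal) \<Rightarrow> bool" where
  "eusc_on S g \<longleftrightarrow> (\<forall>c. closedin S {t \<in> topspace S. c \<le> g t})"

end

theory Submission
  imports Defs "HOL-Library.Function_Algebras"
begin

instantiation "fun" :: (type, real_vector) real_vector
begin

definition scaleR_fun :: "real \<Rightarrow> ('a \<Rightarrow> 'b) \<Rightarrow> 'a \<Rightarrow> 'b" where
  "scaleR_fun r f = (\<lambda>x. r *\<^sub>R f x)"

instance by standard (auto simp: scaleR_fun_def fun_eq_iff algebra_simps)

end

lemma scaleR_fun_apply [simp]: "(r *\<^sub>R f) x = r *\<^sub>R f x"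
  by (simp add: scaleR_fun_def)

text \<open>A locally convex vector topology, not necessarily separated: the separation theorem
  does not need the Hausdorff property, so it need not be verified for \<open>\<tau> \<times> \<real>\<close> or for the
  pointwise topology on functionals.\<close>

definition lctvs :: "'a::real_vector topology \<Rightarrow> bool" where
  "lctvs \<tau> \<longleftrightarrow> topspace \<tau> = UNIV
     \<and> continuous_map (prod_topology \<tau> \<tau>) \<tau> (\<lambda>(x, y). x + y)
     \<and> continuous_map (prod_topology euclideanreal \<tau>) \<tau> (\<lambda>(a, x). a *\<^sub>R x)
     \<and> (\<forall>U x. openin \<tau> U \<and> x \<in> U \<longrightarrow> (\<exists>V. openin \<tau> V \<and> convex V \<and> x \<in> V \<and> V \<subseteq> U))"

lemma lctvs_if_lcs: "lcs \<tau> \<Longrightarrow> lctvs \<tau>"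
  unfolding lcs_def lctvs_def by blast

context
  fixes \<tau> :: "'a::real_vector topology"
  assumes \<tau>: "lctvs \<tau>"
begin

lemma lctvs_topspace [simp]: "topspace \<tau> = UNIV"
  using \<tau> by (simp add: lctvs_def)

lemma lctvs_continuous_add: "continuous_map (prod_topology \<tau> \<tau>) \<tau> (\<lambda>(x, y). x + y)"
  using \<tau> by (simp add: lctvs_def)

lemma lctvs_continuous_scaleR: "continuous_map (prod_topology euclideanreal \<tau>) \<tau> (\<lambda>(a, x). a *\<^sub>R x)"
  using \<tau> by (simp add: lctvs_def)

lemma lctvs_convex_nhd: "openin \<tau> U \<Longrightarrow> x \<in> U \<Longrightarrow> \<exists>V. openin \<tau> V \<and> convex V \<and> x \<in> V \<and> V \<subseteq> U"
  using \<tau> by (simp add: lctvs_def)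

lemma lctvs_continuous_translation: "continuous_map \<tau> \<tau> (\<lambda>y. y + a)"
proof -
  have "continuous_map \<tau> (prod_topology \<tau> \<tau>) (\<lambda>y. (y, a))"
    by (intro continuous_map_pairedI) auto
  from continuous_map_compose[OF this lctvs_continuous_add] show ?thesis by (simp add: o_def)
qed

lemma lctvs_continuous_scaling: "continuous_map \<tau> \<tau> (\<lambda>y. c *\<^sub>R y)"
proof -
  have "continuous_map \<tau> (prod_topology euclideanreal \<tau>) (\<lambda>y. (c, y))"
    by (intro continuous_map_pairedI) auto
  from continuous_map_compose[OF this lctvs_continuous_scaleR] show ?thesis by (simp add: o_def)
qed

lemma lctvs_continuous_ray: "continuous_map euclideanreal \<tau> (\<lambda>s. s *\<^sub>R y)"
proof -
  have "continuous_map euclideanreal (prod_topology euclideanreal \<tau>) (\<lambda>s. (s, y))"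
    by (intro continuous_map_pairedI) auto
  from continuous_map_compose[OF this lctvs_continuous_scaleR] show ?thesis by (simp add: o_def)
qed

lemma lctvs_openin_translation:
  assumes "openin \<tau> U"
  shows "openin \<tau> ((\<lambda>y. y + a) ` U)"
proof -
  have "(\<lambda>y. y + a) ` U = {y \<in> topspace \<tau>. y + (-a) \<in> U}"
    by (force simp: image_iff)
  then show ?thesis
    using openin_continuous_map_preimage[OF lctvs_continuous_translation[of "-a"] assms] by simp
qed

lemma lctvs_openin_scaling:
  assumes "openin \<tau> U" "c \<noteq> 0"
  shows "openin \<tau> ((\<lambda>y. c *\<^sub>R y) ` U)"
proof -
  have "(\<lambda>y. c *\<^sub>R y) ` U = {y \<in> topspace \<tau>. inverse c *\<^sub>R y \<in> U}"
    using assms(2) by (force simp: image_iff)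
  then show ?thesis
    using openin_continuous_map_preimage[OF lctvs_continuous_scaling assms(1)] by simp
qed

lemma lctvs_open_ray_preimage: "openin \<tau> V \<Longrightarrow> open {s. s *\<^sub>R y \<in> V}"
  using openin_continuous_map_preimage[OF lctvs_continuous_ray] by simp

lemma lctvs_absorbing:
  assumes "openin \<tau> V" "0 \<in> V"
  shows "\<exists>t>0. \<forall>s. \<bar>s\<bar> < t \<longrightarrow> s *\<^sub>R y \<in> V"
proof -
  have "0 \<in> {s. s *\<^sub>R y \<in> V}" using assms(2) by simp
  then obtain e where "e > 0" "ball 0 e \<subseteq> {s. s *\<^sub>R y \<in> V}"
    using lctvs_open_ray_preimage[OF assms(1)] open_contains_ball by blast
  then show ?thesis by (intro exI[of _ e]) (auto simp: dist_real_def)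
qed

lemma lctvs_openin_expand:
  assumes "openin \<tau> V" "y \<in> V"
  shows "\<exists>e>0. (1 + e) *\<^sub>R y \<in> V"
proof -
  have "1 \<in> {s. s *\<^sub>R y \<in> V}" using assms(2) by simp
  then obtain e where "e > 0" "ball 1 e \<subseteq> {s. s *\<^sub>R y \<in> V}"
    using lctvs_open_ray_preimage[OF assms(1)] open_contains_ball by blast
  moreover have "1 + e/2 \<in> ball 1 e" using \<open>e > 0\<close> by (simp add: dist_real_def)
  ultimately show ?thesis by (intro exI[of _ "e/2"]) auto
qed

end

lemma convex_scaleR_mem:
  assumes "convex D" "0 \<in> D" "d \<in> D" "0 \<le> l" "l \<le> 1"
  shows "l *\<^sub>R d \<in> D"
  using convexD[OF assms(1) assms(3) assms(2), of l "1 - l"] assms by simp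

definition minkowski_gauge :: "'a::real_vector set \<Rightarrow> 'a \<Rightarrow> real" where
  "minkowski_gauge D y = Inf {r. r > 0 \<and> inverse r *\<^sub>R y \<in> D}"

locale open_convex_nhd0 =
  fixes \<tau> :: "'a::real_vector topology" and D :: "'a set"
  assumes lctvs: "lctvs \<tau>" and openin_D: "openin \<tau> D" and convex_D: "convex D"
    and zero_in_D: "0 \<in> D"
begin

lemma gauge_set_nonempty: "{r. r > 0 \<and> inverse r *\<^sub>R y \<in> D} \<noteq> {}"
proof -
  obtain t where "t > 0" "\<forall>s. \<bar>s\<bar> < t \<longrightarrow> s *\<^sub>R y \<in> D"
    using lctvs_absorbing[OF lctvs openin_D zero_in_D] by blast
  then have "2 / t > 0" "inverse (2 / t) *\<^sub>R y \<in> D" by auto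
  then show ?thesis by blast
qed

lemma gauge_nonneg: "minkowski_gauge D y \<ge> 0"
  unfolding minkowski_gauge_def by (rule cInf_greatest[OF gauge_set_nonempty]) auto

lemma gauge_le: "r > 0 \<Longrightarrow> inverse r *\<^sub>R y \<in> D \<Longrightarrow> minkowski_gauge D y \<le> r"
  unfolding minkowski_gauge_def by (rule cInf_lower) (auto intro: bdd_belowI[of _ 0])

lemma gauge_less_imp_mem:
  assumes "minkowski_gauge D y < r"
  shows "inverse r *\<^sub>R y \<in> D"
proof -
  obtain r' where r': "r' > 0" "inverse r' *\<^sub>R y \<in> D" "r' < r"
    using cInf_lessD[OF gauge_set_nonempty] assms unfolding minkowski_gauge_def by blast
  have "(r' / r) *\<^sub>R (inverse r' *\<^sub>R y) \<in> D"
    by (rule convex_scaleR_mem[OF convex_D zero_in_D r'(2)]) (use r' in auto)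
  moreover have "r' / r * inverse r' = inverse r" using r' by (auto simp: field_simps)
  ultimately show ?thesis by (simp only: scaleR_scaleR)
qed

lemma mem_if_gauge_less_one: "minkowski_gauge D y < 1 \<Longrightarrow> y \<in> D"
  using gauge_less_imp_mem[of y 1] by simp

lemma gauge_less_one_if_mem:
  assumes "y \<in> D"
  shows "minkowski_gauge D y < 1"
proof -
  obtain e where "e > 0" "(1 + e) *\<^sub>R y \<in> D"
    using lctvs_openin_expand[OF lctvs openin_D assms] by blast
  then have "minkowski_gauge D y \<le> inverse (1 + e)" by (intro gauge_le) auto
  also have "\<dots> < 1" using \<open>e > 0\<close> by (simp add: field_simps)
  finally show ?thesis .
qed

lemma gauge_add_le: "minkowski_gauge D (y + z) \<le> minkowski_gauge D y + minkowski_gauge D z"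
proof (rule field_le_epsilon)
  fix e :: real assume "e > 0"
  define r1 where "r1 = minkowski_gauge D y + e/2"
  define r2 where "r2 = minkowski_gauge D z + e/2"
  have r: "r1 > 0" "r2 > 0"
    using gauge_nonneg[of y] gauge_nonneg[of z] \<open>e > 0\<close> r1_def r2_def by auto
  have "inverse r1 *\<^sub>R y \<in> D" "inverse r2 *\<^sub>R z \<in> D"
    using gauge_less_imp_mem \<open>e > 0\<close> r1_def r2_def by simp_all
  then have "(r1 / (r1 + r2)) *\<^sub>R (inverse r1 *\<^sub>R y) + (r2 / (r1 + r2)) *\<^sub>R (inverse r2 *\<^sub>R z) \<in> D"
    using r by (intro convexD[OF convex_D]) (auto simp: add_divide_distrib[symmetric])
  moreover have "r1 / (r1 + r2) * inverse r1 = inverse (r1 + r2)"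
    and "r2 / (r1 + r2) * inverse r2 = inverse (r1 + r2)"
    using r by (simp_all add: field_simps)
  ultimately have "inverse (r1 + r2) *\<^sub>R (y + z) \<in> D"
    by (simp only: scaleR_scaleR scaleR_add_right)
  then have "minkowski_gauge D (y + z) \<le> r1 + r2" using r by (intro gauge_le) auto
  then show "minkowski_gauge D (y + z) \<le> minkowski_gauge D y + minkowski_gauge D z + e"
    using r1_def r2_def by simp
qed

lemma gauge_scale_le:
  assumes "t > 0"
  shows "minkowski_gauge D (t *\<^sub>R y) \<le> t * minkowski_gauge D y"
proof -
  have "minkowski_gauge D (t *\<^sub>R y) / t \<le> minkowski_gauge D y"
  proof (rule dense_ge)
    fix r assume r: "minkowski_gauge D y < r"
    then have "r > 0" using gauge_nonneg[of y] by simp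
    have "inverse (t * r) *\<^sub>R (t *\<^sub>R y) = inverse r *\<^sub>R y"
      using assms \<open>r > 0\<close> by simp
    then have "inverse (t * r) *\<^sub>R (t *\<^sub>R y) \<in> D" using gauge_less_imp_mem[OF r] by (simp only:)
    then have "minkowski_gauge D (t *\<^sub>R y) \<le> t * r" using assms \<open>r > 0\<close> by (intro gauge_le) auto
    then show "minkowski_gauge D (t *\<^sub>R y) / t \<le> r" using assms by (simp add: field_simps)
  qed
  then show ?thesis using assms by (simp add: field_simps)
qed

lemma gauge_scale:
  assumes "t > 0"
  shows "minkowski_gauge D (t *\<^sub>R y) = t * minkowski_gauge D y"
proof -
  have "minkowski_gauge D y \<le> inverse t * minkowski_gauge D (t *\<^sub>R y)"
    using gauge_scale_le[of "inverse t" "t *\<^sub>R y"] assms by simp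
  then show ?thesis using gauge_scale_le[OF assms, of y] assms by (simp add: field_simps)
qed

lemma continuous_if_le_gauge:
  assumes lin: "linear \<Lambda>" and le: "\<And>y. \<Lambda> y \<le> minkowski_gauge D y"
  shows "continuous_map \<tau> euclideanreal \<Lambda>"
proof -
  have bound: "\<bar>\<Lambda> w\<bar> < 1" if "w \<in> D" "-w \<in> D" for w
    using le[of w] le[of "-w"] gauge_less_one_if_mem[OF that(1)] gauge_less_one_if_mem[OF that(2)]
      linear_neg[OF lin, of w] by simp
  have "\<exists>U. openin \<tau> U \<and> x \<in> U \<and> (\<forall>y\<in>U. \<bar>\<Lambda> y - \<Lambda> x\<bar> < e)" if "e > 0" for x e
  proof (intro exI conjI)
    define W where "W = D \<inter> (\<lambda>y. (-1) *\<^sub>R y) ` D"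
    have "openin \<tau> W"
      unfolding W_def using openin_D by (intro openin_Int lctvs_openin_scaling[OF lctvs]) auto
    then show "openin \<tau> ((\<lambda>u. u + x) ` (\<lambda>y. e *\<^sub>R y) ` W)"
      using \<open>e > 0\<close> by (intro lctvs_openin_translation[OF lctvs] lctvs_openin_scaling[OF lctvs]) auto
    show "x \<in> (\<lambda>u. u + x) ` (\<lambda>y. e *\<^sub>R y) ` W"
      unfolding W_def using zero_in_D by (force simp: image_iff)
    show "\<forall>y\<in>(\<lambda>u. u + x) ` (\<lambda>y. e *\<^sub>R y) ` W. \<bar>\<Lambda> y - \<Lambda> x\<bar> < e"
    proof
      fix y assume "y \<in> (\<lambda>u. u + x) ` (\<lambda>y. e *\<^sub>R y) ` W"
      then obtain w where w: "w \<in> D" "-w \<in> D" "y = e *\<^sub>R w + x"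
        unfolding W_def by (auto simp: image_iff)
      then have "\<Lambda> y - \<Lambda> x = e * \<Lambda> w" by (simp add: linear_add[OF lin] linear_scale[OF lin])
      then show "\<bar>\<Lambda> y - \<Lambda> x\<bar> < e" using bound[OF w(1,2)] \<open>e > 0\<close> by (simp add: abs_mult)
    qed
  qed
  then show ?thesis
    using Met_TC.continuous_map_to_metric[of \<tau> \<Lambda>] by (simp add: dist_real_def abs_minus_commute)
qed

end

text \<open>The graph of a linear functional on a subspace, dominated by \<open>p\<close> and taking the value 1
  at \<open>z\<close>; Zorn's lemma is applied to these graphs ordered by inclusion.\<close>

definition dominated_graph :: "('a::real_vector \<Rightarrow> real) \<Rightarrow> 'a \<Rightarrow> ('a \<times> real) set \<Rightarrow> bool" where
  "dominated_graph p z G \<longleftrightarrow> (\<forall>x a b. (x, a) \<in> G \<longrightarrow> (x, b) \<in> G \<longrightarrow> a = b)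
     \<and> (\<forall>x a y b. (x, a) \<in> G \<longrightarrow> (y, b) \<in> G \<longrightarrow> (x + y, a + b) \<in> G)
     \<and> (\<forall>x a c. (x, a) \<in> G \<longrightarrow> (c *\<^sub>R x, c * a) \<in> G)
     \<and> (\<forall>x a. (x, a) \<in> G \<longrightarrow> a \<le> p x) \<and> (z, 1) \<in> G"

lemma dominated_graphD:
  assumes "dominated_graph p z G"
  shows dominated_graph_unique: "(x, a) \<in> G \<Longrightarrow> (x, b) \<in> G \<Longrightarrow> a = b"
    and dominated_graph_add: "(x, a) \<in> G \<Longrightarrow> (y, b) \<in> G \<Longrightarrow> (x + y, a + b) \<in> G"
    and dominated_graph_scale: "(x, a) \<in> G \<Longrightarrow> (c *\<^sub>R x, c * a) \<in> G"
    and dominated_graph_le: "(x, a) \<in> G \<Longrightarrow> a \<le> p x"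
    and dominated_graph_base: "(z, 1) \<in> G"
  using assms unfolding dominated_graph_def by blast+

lemma dominated_graph_extension_value:
  assumes sub: "\<And>x y. p (x + y) \<le> p x + p y" and M: "dominated_graph p z M"
  shows "\<exists>c. \<forall>x a. (x, a) \<in> M \<longrightarrow> a - p (x - y) \<le> c \<and> c \<le> p (x + y) - a"
proof -
  have key: "a1 - p (x1 - y) \<le> p (x2 + y) - a2" if "(x1, a1) \<in> M" "(x2, a2) \<in> M" for x1 a1 x2 a2
  proof -
    have "a1 + a2 \<le> p ((x1 - y) + (x2 + y))"
      using dominated_graph_le[OF M dominated_graph_add[OF M that]] by simp
    then show ?thesis using sub[of "x1 - y" "x2 + y"] by linarith
  qed
  define L where "L = {a - p (x - y) | x a. (x, a) \<in> M}"
  have "L \<noteq> {}" using dominated_graph_base[OF M] unfolding L_def by blast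
  moreover have "bdd_above L"
    unfolding L_def bdd_above_def using key dominated_graph_base[OF M] by blast
  ultimately have "a - p (x - y) \<le> Sup L" "Sup L \<le> p (x + y) - a" if "(x, a) \<in> M" for x a
    using that key by (auto intro!: cSup_upper cSup_least simp: L_def)
  then show ?thesis by blast
qed

context
  fixes p :: "'a::real_vector \<Rightarrow> real" and z y :: 'a and c :: real and M :: "('a \<times> real) set"
  assumes M: "dominated_graph p z M"
    and c: "\<And>x a. (x, a) \<in> M \<Longrightarrow> a - p (x - y) \<le> c \<and> c \<le> p (x + y) - a"
begin

lemma dominated_graph_extension_le:
  assumes hom: "\<And>t x. t > 0 \<Longrightarrow> p (t *\<^sub>R x) = t * p x" and xa: "(x, a) \<in> M"
  shows "a + t * c \<le> p (x + t *\<^sub>R y)"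
proof (cases t "0::real" rule: linorder_cases)
  case equal
  then show ?thesis using dominated_graph_le[OF M xa] by simp
next
  case greater
  have "c \<le> p (inverse t *\<^sub>R x + y) - inverse t * a"
    using c[OF dominated_graph_scale[OF M xa]] by simp
  then have "t * c \<le> t * p (inverse t *\<^sub>R x + y) - a"
    using greater by (simp add: field_simps)
  also have "t * p (inverse t *\<^sub>R x + y) = p (x + t *\<^sub>R y)"
    using hom[OF greater, of "inverse t *\<^sub>R x + y"] greater by (simp add: algebra_simps)
  finally show ?thesis by simp
next
  case less
  define s where "s = - t"
  have "s > 0" using less s_def by simp
  have "inverse s * a - p (inverse s *\<^sub>R x - y) \<le> c"
    using c[OF dominated_graph_scale[OF M xa]] by simp
  then have "a - s * p (inverse s *\<^sub>R x - y) \<le> s * c"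
    using \<open>s > 0\<close> by (simp add: field_simps)
  also have "s * p (inverse s *\<^sub>R x - y) = p (x + t *\<^sub>R y)"
    using hom[OF \<open>s > 0\<close>, of "inverse s *\<^sub>R x - y"] \<open>s > 0\<close> by (simp add: s_def algebra_simps)
  finally show ?thesis by (simp add: s_def)
qed

lemma dominated_graph_extension_unique:
  assumes y: "y \<notin> fst ` M" and xa: "(x1, a1) \<in> M" "(x2, a2) \<in> M"
    and eq: "x1 + t1 *\<^sub>R y = x2 + t2 *\<^sub>R y"
  shows "a1 + t1 * c = a2 + t2 * c"
proof (cases "t1 = t2")
  case True
  then show ?thesis using eq dominated_graph_unique[OF M] xa by auto
next
  case False
  have "(inverse (t2 - t1) *\<^sub>R (x1 + (-1) *\<^sub>R x2), inverse (t2 - t1) * (a1 + (-1) * a2)) \<in> M"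
    using dominated_graph_scale[OF M dominated_graph_add[OF M xa(1) dominated_graph_scale[OF M xa(2)]]] .
  moreover have "x1 + (-1) *\<^sub>R x2 = (t2 - t1) *\<^sub>R y" using eq by (simp add: algebra_simps)
  ultimately have "(y, inverse (t2 - t1) * (a1 - a2)) \<in> M" using False by simp
  then show ?thesis using y by force
qed

lemma dominated_graph_extension:
  assumes hom: "\<And>t x. t > 0 \<Longrightarrow> p (t *\<^sub>R x) = t * p x" and y: "y \<notin> fst ` M"
  shows "dominated_graph p z {(x + t *\<^sub>R y, a + t * c) | x a t. (x, a) \<in> M}"
    (is "dominated_graph p z ?M'")
proof -
  have mem: "(x + t *\<^sub>R y, a + t * c) \<in> ?M'" if "(x, a) \<in> M" for x a t
    using that by blast
  show ?thesis
    unfolding dominated_graph_def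
  proof (intro conjI allI impI; (elim CollectE exE conjE)?)
    fix x a b x1 a1 t1 x2 a2 t2
    assume "(x, a) = (x1 + t1 *\<^sub>R y, a1 + t1 * c)" "(x1, a1) \<in> M"
      "(x, b) = (x2 + t2 *\<^sub>R y, a2 + t2 * c)" "(x2, a2) \<in> M"
    then show "a = b" using dominated_graph_extension_unique[OF y] by auto
  next
    fix x a x' b x1 a1 t1 x2 a2 t2
    assume "(x, a) = (x1 + t1 *\<^sub>R y, a1 + t1 * c)" "(x1, a1) \<in> M"
      "(x', b) = (x2 + t2 *\<^sub>R y, a2 + t2 * c)" "(x2, a2) \<in> M"
    then show "(x + x', a + b) \<in> ?M'"
      using mem[OF dominated_graph_add[OF M], of x1 a1 x2 a2 "t1 + t2"] by (simp add: algebra_simps)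
  next
    fix x a d x1 a1 t1
    assume "(x, a) = (x1 + t1 *\<^sub>R y, a1 + t1 * c)" "(x1, a1) \<in> M"
    then show "(d *\<^sub>R x, d * a) \<in> ?M'"
      using mem[OF dominated_graph_scale[OF M], of x1 a1 d "d * t1"] by (simp add: algebra_simps)
  next
    fix x a x1 a1 t1
    assume "(x, a) = (x1 + t1 *\<^sub>R y, a1 + t1 * c)" "(x1, a1) \<in> M"
    then show "a \<le> p x" using dominated_graph_extension_le[OF hom] by auto
  next
    show "(z, 1) \<in> ?M'" using mem[OF dominated_graph_base[OF M], of 0] by simp
  qed
qed

end

lemma dominated_graph_Union_chain:
  assumes C: "C \<in> chains {G. dominated_graph p z G}" and "C \<noteq> {}"
  shows "dominated_graph p z (\<Union>C)"
proof -
  have G: "\<And>G. G \<in> C \<Longrightarrow> dominated_graph p z G" using C unfolding chains_def by blast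
  have two: "\<exists>G\<in>C. u \<in> G \<and> v \<in> G" if "u \<in> \<Union>C" "v \<in> \<Union>C" for u v
    using that C unfolding chains_def chain_subset_def by blast
  show ?thesis unfolding dominated_graph_def
  proof (intro conjI allI impI)
    fix x a b assume "(x, a) \<in> \<Union>C" "(x, b) \<in> \<Union>C"
    then obtain G where "G \<in> C" "(x, a) \<in> G" "(x, b) \<in> G" using two by blast
    then show "a = b" using dominated_graph_unique[OF G] by blast
  next
    fix x a y b assume "(x, a) \<in> \<Union>C" "(y, b) \<in> \<Union>C"
    then obtain G where "G \<in> C" "(x, a) \<in> G" "(y, b) \<in> G" using two by blast
    then show "(x + y, a + b) \<in> \<Union>C" using dominated_graph_add[OF G] by blast
  next
    fix x a c assume "(x, a) \<in> \<Union>C"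
    then obtain G where "G \<in> C" "(x, a) \<in> G" by blast
    then show "(c *\<^sub>R x, c * a) \<in> \<Union>C" using dominated_graph_scale[OF G] by blast
  next
    fix x a assume "(x, a) \<in> \<Union>C"
    then obtain G where "G \<in> C" "(x, a) \<in> G" by blast
    then show "a \<le> p x" using dominated_graph_le[OF G] by blast
  next
    show "(z, 1) \<in> \<Union>C" using \<open>C \<noteq> {}\<close> G dominated_graph_base by blast
  qed
qed

lemma dominated_graph_line:
  assumes nonneg: "\<And>x. p x \<ge> 0" and hom: "\<And>t x. t > 0 \<Longrightarrow> p (t *\<^sub>R x) = t * p x"
    and z: "p z \<ge> 1"
  shows "dominated_graph p z {(t *\<^sub>R z, t) | t. True}"
  unfolding dominated_graph_def
proof (intro conjI allI impI)
  have "z \<noteq> 0" using z hom[of 2 0] by auto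
  then show "a = b" if "(x, a) \<in> {(t *\<^sub>R z, t) | t. True}" "(x, b) \<in> {(t *\<^sub>R z, t) | t. True}"
    for x a b
    using that by (auto simp: scaleR_cancel_right)
  show "a \<le> p x" if "(x, a) \<in> {(t *\<^sub>R z, t) | t. True}" for x a
  proof (cases "a > 0")
    case True
    then show ?thesis using that hom[OF True, of z] z by (auto simp: mult_le_cancel_left1)
  next
    case False
    then show ?thesis using nonneg[of x] by linarith
  qed
  show "(x + y, a + b) \<in> {(t *\<^sub>R z, t) | t. True}"
    if "(x, a) \<in> {(t *\<^sub>R z, t) | t. True}" "(y, b) \<in> {(t *\<^sub>R z, t) | t. True}" for x a y b
    using that by (auto simp: scaleR_add_left)
  show "(c *\<^sub>R x, c * a) \<in> {(t *\<^sub>R z, t) | t. True}" if "(x, a) \<in> {(t *\<^sub>R z, t) | t. True}"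
    for x a c
    using that by auto
  show "(z, 1) \<in> {(t *\<^sub>R z, t) | t. True}" by (auto intro!: exI[of _ 1])
qed

lemma dominated_graph_maximal_total:
  assumes sub: "\<And>x y. p (x + y) \<le> p x + p y" and hom: "\<And>t x. t > 0 \<Longrightarrow> p (t *\<^sub>R x) = t * p x"
    and M: "dominated_graph p z M" and max: "\<And>X. dominated_graph p z X \<Longrightarrow> M \<subseteq> X \<Longrightarrow> X = M"
  shows "y \<in> fst ` M"
proof (rule ccontr)
  assume y: "y \<notin> fst ` M"
  obtain c where c: "\<And>x a. (x, a) \<in> M \<Longrightarrow> a - p (x - y) \<le> c \<and> c \<le> p (x + y) - a"
    using dominated_graph_extension_value[OF sub M, of y] by blast
  let ?M' = "{(x + t *\<^sub>R y, a + t * c) | x a t. (x, a) \<in> M}"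
  have "(x, a) \<in> ?M'" if "(x, a) \<in> M" for x a
    using that by (intro CollectI exI[of _ x] exI[of _ a] exI[of _ "0::real"]) simp
  then have "?M' = M"
    by (intro max[OF dominated_graph_extension[OF M c hom y]]) auto
  moreover have "(y, c) \<in> ?M'"
    using dominated_graph_scale[OF M dominated_graph_base[OF M], of 0]
    by (intro CollectI exI[of _ 0] exI[of _ "0::real"] exI[of _ "1::real"]) simp
  ultimately have "(y, c) \<in> M" by simp
  then show False using y by force
qed

lemma dominated_graph_total_functional:
  assumes M: "dominated_graph p z M" and total: "\<And>y. y \<in> fst ` M"
  shows "\<exists>\<Lambda>. linear \<Lambda> \<and> (\<forall>x. \<Lambda> x \<le> p x) \<and> \<Lambda> z = 1"
proof -
  define \<Lambda> where "\<Lambda> x = (THE a. (x, a) \<in> M)" for x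
  have graph_eq: "\<Lambda> x = a" if "(x, a) \<in> M" for x a
    unfolding \<Lambda>_def using that dominated_graph_unique[OF M] by blast
  have graph: "(x, \<Lambda> x) \<in> M" for x
    using total[of x] graph_eq by force
  have "linear \<Lambda>"
  proof (rule linearI)
    show "\<Lambda> (x + y) = \<Lambda> x + \<Lambda> y" for x y
      using graph_eq[OF dominated_graph_add[OF M graph graph]] .
    show "\<Lambda> (r *\<^sub>R x) = r *\<^sub>R \<Lambda> x" for r x
      using graph_eq[OF dominated_graph_scale[OF M graph]] by simp
  qed
  then show ?thesis
    using dominated_graph_le[OF M graph] graph_eq[OF dominated_graph_base[OF M]] by blast
qed

lemma hahn_banach_sublinear:
  fixes p :: "'a::real_vector \<Rightarrow> real"
  assumes nonneg: "\<And>x. p x \<ge> 0" and sub: "\<And>x y. p (x + y) \<le> p x + p y"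
    and hom: "\<And>t x. t > 0 \<Longrightarrow> p (t *\<^sub>R x) = t * p x" and z: "p z \<ge> 1"
  shows "\<exists>\<Lambda>. linear \<Lambda> \<and> (\<forall>x. \<Lambda> x \<le> p x) \<and> \<Lambda> z = 1"
proof -
  let ?\<A> = "{G. dominated_graph p z G}"
  have "\<forall>C\<in>chains ?\<A>. \<exists>U\<in>?\<A>. \<forall>X\<in>C. X \<subseteq> U"
  proof
    fix C assume C: "C \<in> chains ?\<A>"
    show "\<exists>U\<in>?\<A>. \<forall>X\<in>C. X \<subseteq> U"
    proof (cases "C = {}")
      case True
      then show ?thesis using dominated_graph_line[OF nonneg hom z] by blast
    next
      case False
      then show ?thesis using dominated_graph_Union_chain[OF C] by blast
    qed
  qed
  from Zorn_Lemma2[OF this] obtain M where M: "dominated_graph p z M"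
    and max: "\<And>X. dominated_graph p z X \<Longrightarrow> M \<subseteq> X \<Longrightarrow> X = M"
    by blast
  show ?thesis
    by (rule dominated_graph_total_functional[OF M dominated_graph_maximal_total[OF sub hom M max]])
qed

lemma open_convex_nhd0_differences:
  assumes \<tau>: "lctvs \<tau>" and K: "convex K" "k0 \<in> K" and V: "openin \<tau> V" "convex V" "0 \<in> V"
  shows "open_convex_nhd0 \<tau> (\<Union>k\<in>K. \<Union>v\<in>V. {k - v - k0})"
proof
  show "lctvs \<tau>" by (rule \<tau>)
  have "(\<Union>k\<in>K. \<Union>v\<in>V. {k - v - k0}) = (\<lambda>u. u - k0) ` (\<Union>k\<in>K. \<Union>v\<in>V. {k - v})"
    by auto
  then show "convex (\<Union>k\<in>K. \<Union>v\<in>V. {k - v - k0})"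
    using convex_translation_subtract[OF convex_differences[OF K(1) V(2)]] by simp
  have "(\<Union>k\<in>K. \<Union>v\<in>V. {k - v - k0}) = (\<Union>k\<in>K. (\<lambda>u. u + (k - k0)) ` (\<lambda>v. (-1) *\<^sub>R v) ` V)"
    by (auto simp: image_iff)
  moreover have "openin \<tau> ((\<lambda>u. u + (k - k0)) ` (\<lambda>v. (-1) *\<^sub>R v) ` V)" for k
    using V(1) by (intro lctvs_openin_translation[OF \<tau>] lctvs_openin_scaling[OF \<tau>]) auto
  ultimately show "openin \<tau> (\<Union>k\<in>K. \<Union>v\<in>V. {k - v - k0})" by auto
  show "0 \<in> (\<Union>k\<in>K. \<Union>v\<in>V. {k - v - k0})" using K(2) V(3) by force
qed

text \<open>It is
  obtained from Hahn--Banach for the gauge of \<open>K - V - k\<^sub>0\<close>, which excludes \<open>p - k\<^sub>0\<close>.\<close>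

lemma lctvs_separation:
  fixes \<tau> :: "'a::real_vector topology"
  assumes \<tau>: "lctvs \<tau>" and K: "convex K" and V: "openin \<tau> V" "convex V" "0 \<in> V"
    and disj: "\<forall>k\<in>K. \<forall>v\<in>V. p + v \<noteq> k"
  shows "\<exists>\<Lambda> \<alpha>. linear \<Lambda> \<and> continuous_map \<tau> euclideanreal \<Lambda> \<and> (\<forall>k\<in>K. \<Lambda> k \<le> \<alpha>) \<and> \<alpha> < \<Lambda> p"
proof (cases "K = {}")
  case True
  then show ?thesis by (intro exI[of _ "\<lambda>_. 0"] exI[of _ "-1"]) (auto intro: linearI)
next
  case False
  then obtain k0 where k0: "k0 \<in> K" by blast
  define D where "D = (\<Union>k\<in>K. \<Union>v\<in>V. {k - v - k0})"
  interpret D: open_convex_nhd0 \<tau> D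
    unfolding D_def by (rule open_convex_nhd0_differences[OF \<tau> K k0 V])
  have "p - k0 \<notin> D" using disj unfolding D_def by (auto simp: algebra_simps)
  then have "minkowski_gauge D (p - k0) \<ge> 1" using D.mem_if_gauge_less_one by force
  from hahn_banach_sublinear[OF D.gauge_nonneg D.gauge_add_le D.gauge_scale this]
  obtain \<Lambda> where L: "linear \<Lambda>" "\<And>x. \<Lambda> x \<le> minkowski_gauge D x" "\<Lambda> (p - k0) = 1" by blast
  obtain t where t: "t > 0" "\<forall>s. \<bar>s\<bar> < t \<longrightarrow> s *\<^sub>R (p - k0) \<in> V"
    using lctvs_absorbing[OF \<tau> V(1,3)] by blast
  have "\<Lambda> k \<le> \<Lambda> k0 + 1 - t/2" if "k \<in> K" for k
  proof -
    have "(- t/2) *\<^sub>R (p - k0) \<in> V" using t(2)[rule_format, of "- t/2"] t(1) by simp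
    then have "k - (- t/2) *\<^sub>R (p - k0) - k0 \<in> D" unfolding D_def using that by blast
    then have "\<Lambda> (k - (- t/2) *\<^sub>R (p - k0) - k0) < 1"
      using L(2) D.gauge_less_one_if_mem by (meson le_less_trans)
    moreover have "\<Lambda> ((- t/2) *\<^sub>R (p - k0)) = - t/2" using L(3) linear_scale[OF L(1), of "- t/2" "p - k0"] by (simp only: real_scaleR_def mult_1_right)
    moreover have "\<Lambda> (k - (- t/2) *\<^sub>R (p - k0) - k0) = \<Lambda> k - \<Lambda> ((- t/2) *\<^sub>R (p - k0)) - \<Lambda> k0"
      by (simp only: linear_diff[OF L(1)])
    ultimately show ?thesis by linarith
  qed
  moreover have "\<Lambda> p = \<Lambda> k0 + 1" using L(1,3) by (simp add: linear_diff)
  ultimately show ?thesis using L(1) D.continuous_if_le_gauge[OF L(1,2)] t(1)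
    by (intro exI[of _ \<Lambda>] exI[of _ "\<Lambda> k0 + 1 - t/2"]) auto
qed

lemma lctvs_point_nhd_avoiding:
  assumes \<tau>: "lctvs \<tau>" and E: "closedin \<tau> E" "s \<notin> E"
  shows "\<exists>W. openin \<tau> W \<and> 0 \<in> W \<and> (\<forall>a\<in>W. \<forall>b\<in>W. s + a + b \<notin> E)"
proof -
  let ?U = "{z \<in> topspace (prod_topology \<tau> \<tau>). (case z of (a, b) \<Rightarrow> a + b) + s \<in> UNIV - E}"
  have "continuous_map (prod_topology \<tau> \<tau>) \<tau> (\<lambda>z. (case z of (a, b) \<Rightarrow> a + b) + s)"
    using continuous_map_compose[OF lctvs_continuous_add[OF \<tau>] lctvs_continuous_translation[OF \<tau>]]
    by (simp add: o_def)
  moreover have "openin \<tau> (UNIV - E)" using E(1) \<tau> by (simp add: closedin_def)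
  ultimately have "openin (prod_topology \<tau> \<tau>) ?U" by (rule openin_continuous_map_preimage)
  moreover have "(0, 0) \<in> ?U" using E(2) \<tau> by simp
  ultimately obtain A B where AB: "openin \<tau> A" "openin \<tau> B" "0 \<in> A" "0 \<in> B" "A \<times> B \<subseteq> ?U"
    by (subst (asm) openin_prod_topology_alt) (elim allE impE exE conjE, assumption, blast)
  have "s + a + b \<notin> E" if "a \<in> A" "b \<in> B" for a b
  proof -
    have "(a, b) \<in> ?U" using AB(5) that by blast
    then show ?thesis by (simp add: add.commute add.left_commute)
  qed
  then show ?thesis using AB by (intro exI[of _ "A \<inter> B"]) auto
qed

lemma lctvs_compact_translates_subcover:
  assumes \<tau>: "lctvs \<tau>" and \<Sigma>: "compactin \<tau> \<Sigma>"
    and W: "\<And>s. s \<in> \<Sigma> \<Longrightarrow> openin \<tau> (W s)" "\<And>s. s \<in> \<Sigma> \<Longrightarrow> 0 \<in> W s"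
  obtains S0 where "S0 \<subseteq> \<Sigma>" "finite S0" "\<Sigma> \<subseteq> (\<Union>s\<in>S0. (\<lambda>y. y + s) ` W s)"
proof -
  define \<U> where "\<U> = (\<lambda>s. (\<lambda>y. y + s) ` W s) ` \<Sigma>"
  have "s \<in> (\<lambda>y. y + s) ` W s" if "s \<in> \<Sigma>" for s
    using W(2)[OF that] by (rule rev_image_eqI) simp
  then have cover: "\<Sigma> \<subseteq> \<Union>\<U>" unfolding \<U>_def by blast
  have opens: "openin \<tau> U" if "U \<in> \<U>" for U
  proof -
    from that obtain s where "s \<in> \<Sigma>" "U = (\<lambda>y. y + s) ` W s" unfolding \<U>_def by blast
    then show ?thesis using lctvs_openin_translation[OF \<tau> W(1)] by simp
  qed
  obtain \<F> where \<F>: "finite \<F>" "\<F> \<subseteq> \<U>" "\<Sigma> \<subseteq> \<Union>\<F>"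
    using compactinD[OF \<Sigma> opens cover] by blast
  obtain S0 where "S0 \<subseteq> \<Sigma>" "finite S0" "\<F> = (\<lambda>s. (\<lambda>y. y + s) ` W s) ` S0"
    using finite_subset_image[OF \<F>(1,2)[unfolded \<U>_def]] by blast
  with \<F>(3) show ?thesis by (intro that[of S0]) auto
qed

lemma lctvs_compact_nhd_avoiding:
  assumes \<tau>: "lctvs \<tau>" and \<Sigma>: "compactin \<tau> \<Sigma>" and E: "closedin \<tau> E" "\<Sigma> \<inter> E = {}"
  shows "\<exists>V. openin \<tau> V \<and> convex V \<and> 0 \<in> V \<and> (\<forall>s\<in>\<Sigma>. \<forall>v\<in>V. s + v \<notin> E)"
proof -
  have "\<forall>s\<in>\<Sigma>. \<exists>W. openin \<tau> W \<and> 0 \<in> W \<and> (\<forall>a\<in>W. \<forall>b\<in>W. s + a + b \<notin> E)"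
  proof
    fix s assume "s \<in> \<Sigma>"
    then have "s \<notin> E" using E(2) by blast
    then show "\<exists>W. openin \<tau> W \<and> 0 \<in> W \<and> (\<forall>a\<in>W. \<forall>b\<in>W. s + a + b \<notin> E)"
      by (rule lctvs_point_nhd_avoiding[OF \<tau> E(1)])
  qed
  from bchoice[OF this] obtain W
    where "\<forall>s\<in>\<Sigma>. openin \<tau> (W s) \<and> 0 \<in> W s \<and> (\<forall>a\<in>W s. \<forall>b\<in>W s. s + a + b \<notin> E)"
    by blast
  then have W: "\<And>s. s \<in> \<Sigma> \<Longrightarrow> openin \<tau> (W s)" "\<And>s. s \<in> \<Sigma> \<Longrightarrow> 0 \<in> W s"
    "\<And>s a b. s \<in> \<Sigma> \<Longrightarrow> a \<in> W s \<Longrightarrow> b \<in> W s \<Longrightarrow> s + a + b \<notin> E"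
    by blast+
  obtain S0 where S0: "S0 \<subseteq> \<Sigma>" "finite S0" "\<Sigma> \<subseteq> (\<Union>s\<in>S0. (\<lambda>y. y + s) ` W s)"
    by (rule lctvs_compact_translates_subcover[OF \<tau> \<Sigma> W(1,2)])
  have "openin \<tau> UNIV" using openin_topspace[of \<tau>] \<tau> by simp
  then have "openin \<tau> (UNIV \<inter> \<Inter>(W ` S0))"
    using S0 W(1) by (intro openin_Int_Inter) auto
  moreover have "0 \<in> UNIV \<inter> \<Inter>(W ` S0)" using S0 W(2) by auto
  ultimately obtain V where V: "openin \<tau> V" "convex V" "0 \<in> V" "V \<subseteq> UNIV \<inter> \<Inter>(W ` S0)"
    by (rule lctvs_convex_nhd[OF \<tau>, THEN exE]) blast
  have "s + v \<notin> E" if "s \<in> \<Sigma>" "v \<in> V" for s v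
  proof -
    from S0(3) \<open>s \<in> \<Sigma>\<close> obtain s0 where "s0 \<in> S0" "s \<in> (\<lambda>y. y + s0) ` W s0" by blast
    then obtain y where "y \<in> W s0" "s + v = s0 + y + v" by (auto simp: algebra_simps)
    moreover have "v \<in> W s0" using V(4) \<open>s0 \<in> S0\<close> \<open>v \<in> V\<close> by blast
    ultimately show ?thesis using W(3)[of s0 y v] S0(1) \<open>s0 \<in> S0\<close> by auto
  qed
  then show ?thesis using V by blast
qed

context
  fixes \<tau> :: "'a::real_vector topology"
  assumes \<tau>: "lctvs \<tau>"
begin

lemma lctvs_prod_continuous_add:
  "continuous_map (prod_topology (prod_topology \<tau> euclideanreal) (prod_topology \<tau> euclideanreal))
     (prod_topology \<tau> euclideanreal) (\<lambda>(x, y). x + y)"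
proof -
  let ?P = "prod_topology \<tau> euclideanreal"
  have "continuous_map (prod_topology ?P ?P) (prod_topology \<tau> \<tau>) (\<lambda>z. (fst (fst z), fst (snd z)))"
    using continuous_map_compose[OF continuous_map_fst continuous_map_fst]
      continuous_map_compose[OF continuous_map_snd continuous_map_fst]
    by (intro continuous_map_pairedI) (simp_all add: o_def)
  from continuous_map_compose[OF this lctvs_continuous_add[OF \<tau>]]
  have "continuous_map (prod_topology ?P ?P) \<tau> (\<lambda>z. fst (fst z) + fst (snd z))"
    by (simp add: o_def)
  moreover have "continuous_map (prod_topology ?P ?P) euclideanreal (\<lambda>z. snd (fst z) + snd (snd z))"
    using continuous_map_compose[OF continuous_map_fst continuous_map_snd]
      continuous_map_compose[OF continuous_map_snd continuous_map_snd]
    by (intro continuous_map_add) (simp_all add: o_def)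
  moreover have "(\<lambda>(x, y). x + y) = (\<lambda>z::('a \<times> real) \<times> ('a \<times> real).
      (fst (fst z) + fst (snd z), snd (fst z) + snd (snd z)))"
    by (auto simp: fun_eq_iff)
  ultimately show ?thesis by (simp add: continuous_map_paired)
qed

lemma lctvs_prod_continuous_scaleR:
  "continuous_map (prod_topology euclideanreal (prod_topology \<tau> euclideanreal))
     (prod_topology \<tau> euclideanreal) (\<lambda>(a, x). a *\<^sub>R x)"
proof -
  let ?P = "prod_topology euclideanreal (prod_topology \<tau> euclideanreal)"
  have "continuous_map ?P (prod_topology euclideanreal \<tau>) (\<lambda>z. (fst z, fst (snd z)))"
    using continuous_map_compose[OF continuous_map_snd continuous_map_fst]
    by (intro continuous_map_pairedI continuous_map_fst) (simp add: o_def)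
  from continuous_map_compose[OF this lctvs_continuous_scaleR[OF \<tau>]]
  have "continuous_map ?P \<tau> (\<lambda>z. fst z *\<^sub>R fst (snd z))"
    by (simp add: o_def)
  moreover have "continuous_map ?P euclideanreal (\<lambda>z. fst z * snd (snd z))"
    using continuous_map_compose[OF continuous_map_snd continuous_map_snd]
    by (intro continuous_map_real_mult continuous_map_fst) (simp add: o_def)
  moreover have "(\<lambda>(a, x). a *\<^sub>R x) = (\<lambda>z::real \<times> ('a \<times> real).
      (fst z *\<^sub>R fst (snd z), fst z * snd (snd z)))"
    by (auto simp: fun_eq_iff)
  ultimately show ?thesis by (simp add: continuous_map_paired)
qed

lemma lctvs_prod: "lctvs (prod_topology \<tau> euclideanreal)"
  unfolding lctvs_def
proof (intro conjI allI impI lctvs_prod_continuous_add lctvs_prod_continuous_scaleR)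
  show "topspace (prod_topology \<tau> euclideanreal) = UNIV" using \<tau> by simp
  fix U :: "('a \<times> real) set" and x assume "openin (prod_topology \<tau> euclideanreal) U \<and> x \<in> U"
  then obtain A B where AB: "openin \<tau> A" "openin euclideanreal B" "fst x \<in> A" "snd x \<in> B" "A \<times> B \<subseteq> U"
    unfolding openin_prod_topology_alt by (metis prod.collapse)
  obtain A' where A': "openin \<tau> A'" "convex A'" "fst x \<in> A'" "A' \<subseteq> A"
    using lctvs_convex_nhd[OF \<tau> AB(1,3)] by blast
  obtain e where e: "e > 0" "ball (snd x) e \<subseteq> B" using AB(2,4) by (auto simp: open_contains_ball)
  show "\<exists>V. openin (prod_topology \<tau> euclideanreal) V \<and> convex V \<and> x \<in> V \<and> V \<subseteq> U"
    using A' e AB(5) by (intro exI[of _ "A' \<times> ball (snd x) e"])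
      (auto simp: openin_prod_Times_iff convex_Times mem_Times_iff)
qed

end

lemma open_fun_contains_box:
  fixes U :: "('b \<Rightarrow> real) set"
  assumes "open U" "f \<in> U"
  shows "\<exists>Z e. finite Z \<and> e > 0 \<and> {g. \<forall>z\<in>Z. \<bar>g z - f z\<bar> < e} \<subseteq> U"
proof -
  have "openin (product_topology (\<lambda>_. euclideanreal) UNIV) U"
    using assms(1) by (simp add: euclidean_product_topology)
  then obtain W where W: "finite {i. W i \<noteq> UNIV}" "\<And>i. open (W i)" "f \<in> Pi\<^sub>E UNIV W"
    "Pi\<^sub>E UNIV W \<subseteq> U"
    using assms(2) unfolding openin_product_topology_alt by auto
  define Z where "Z = {i. W i \<noteq> UNIV}"
  have "\<forall>i. \<exists>e>0. ball (f i) e \<subseteq> W i"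
    using W(2,3) by (metis PiE_iff UNIV_I open_contains_ball)
  then obtain ee where ee: "\<And>i. ee i > 0" "\<And>i. ball (f i) (ee i) \<subseteq> W i" by metis
  define e where "e = (if Z = {} then 1 else Min (ee ` Z))"
  have "e > 0" unfolding e_def using W(1) ee(1) Z_def by auto
  have "g i \<in> W i" if "\<forall>z\<in>Z. \<bar>g z - f z\<bar> < e" for g i
  proof (cases "i \<in> Z")
    case True
    then have "e \<le> ee i" unfolding e_def using W(1) Z_def by auto
    then have "g i \<in> ball (f i) (ee i)" using that True by (auto simp: dist_real_def)
    then show ?thesis using ee(2) by blast
  next
    case False
    then show ?thesis unfolding Z_def by auto
  qed
  then have "{g. \<forall>z\<in>Z. \<bar>g z - f z\<bar> < e} \<subseteq> Pi\<^sub>E UNIV W" by auto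
  then show ?thesis using W(1,4) \<open>e > 0\<close> Z_def by (intro exI[of _ Z] exI[of _ e]) auto
qed

lemma open_fun_box:
  fixes f :: "'b \<Rightarrow> real"
  assumes "finite Z"
  shows "open {g. \<forall>z\<in>Z. \<bar>g z - f z\<bar> < e}"
  using product_topology_basis'[OF assms, where x="\<lambda>z. z" and U="\<lambda>z. ball (f z) e"]
  by (simp add: dist_real_def abs_minus_commute)

lemma convex_fun_box:
  fixes f :: "'b \<Rightarrow> real"
  shows "convex {g. \<forall>z\<in>Z. \<bar>g z - f z\<bar> < e}"
proof -
  have "{g. \<forall>z\<in>Z. \<bar>g z - f z\<bar> < e} = (\<Inter>z\<in>Z. (\<lambda>g. g z) -` ball (f z) e)"
    by (auto simp: dist_real_def abs_minus_commute)
  moreover have "linear (\<lambda>g::'b \<Rightarrow> real. g z)" for z by (rule linearI) auto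
  ultimately show ?thesis by (simp add: convex_INT convex_linear_vimage)
qed

lemma continuous_map_evaluation: "continuous_map euclidean euclideanreal (\<lambda>g::'b \<Rightarrow> real. g z)"
  by (simp add: continuous_map_iff_continuous2)

lemma lctvs_fun: "lctvs (euclidean :: ('b \<Rightarrow> real) topology)"
  unfolding lctvs_def
proof (intro conjI allI impI)
  show "topspace (euclidean :: ('b \<Rightarrow> real) topology) = UNIV" by simp
  have "continuous_on UNIV (\<lambda>p::('b \<Rightarrow> real) \<times> ('b \<Rightarrow> real). fst p i + snd p i)" for i
    using continuous_on_product_then_coordinatewise[OF continuous_on_fst[OF continuous_on_id]]
      continuous_on_product_then_coordinatewise[OF continuous_on_snd[OF continuous_on_id]]
    by (rule continuous_on_add)
  then have "continuous_on UNIV (\<lambda>p::('b \<Rightarrow> real) \<times> ('b \<Rightarrow> real). fst p + snd p)"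
    by (intro continuous_on_coordinatewise_then_product) simp
  then show "continuous_map (prod_topology euclidean euclidean) euclidean (\<lambda>(x::'b \<Rightarrow> real, y). x + y)"
    by (simp add: prod_topology_euclidean continuous_map_iff_continuous2 case_prod_beta)
  have "continuous_on UNIV (\<lambda>p::real \<times> ('b \<Rightarrow> real). fst p * snd p i)" for i
    using continuous_on_fst[OF continuous_on_id]
      continuous_on_product_then_coordinatewise[OF continuous_on_snd[OF continuous_on_id]]
    by (rule continuous_on_mult)
  then have "continuous_on UNIV (\<lambda>p::real \<times> ('b \<Rightarrow> real). fst p *\<^sub>R snd p)"
    by (intro continuous_on_coordinatewise_then_product) simp
  then show "continuous_map (prod_topology euclideanreal euclidean) euclidean (\<lambda>(a, x::'b \<Rightarrow> real). a *\<^sub>R x)"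
    by (simp add: prod_topology_euclidean continuous_map_iff_continuous2 case_prod_beta)
next
  fix U :: "('b \<Rightarrow> real) set" and f assume "openin euclidean U \<and> f \<in> U"
  then obtain Z e where "finite Z" "e > 0" "{g. \<forall>z\<in>Z. \<bar>g z - f z\<bar> < e} \<subseteq> U"
    using open_fun_contains_box[of U f] by auto
  then show "\<exists>V. openin euclidean V \<and> convex V \<and> f \<in> V \<and> V \<subseteq> U"
    using open_fun_box[of Z f e] convex_fun_box[of Z f e]
    by (intro exI[of _ "{g. \<forall>z\<in>Z. \<bar>g z - f z\<bar> < e}"]) auto
qed

lemma continuous_linear_fun_finite_support:
  fixes \<Lambda> :: "('b \<Rightarrow> real) \<Rightarrow> real"
  assumes lin: "linear \<Lambda>" and cont: "continuous_map euclidean euclideanreal \<Lambda>"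
  shows "\<exists>Z. finite Z \<and> (\<forall>\<psi>. (\<forall>z\<in>Z. \<psi> z = 0) \<longrightarrow> \<Lambda> \<psi> = 0)"
proof -
  have "open {\<psi>. \<Lambda> \<psi> \<in> ball 0 1}"
    using openin_continuous_map_preimage[OF cont, of "ball 0 1"] by simp
  moreover have "0 \<in> {\<psi>. \<Lambda> \<psi> \<in> ball 0 1}" using linear_0[OF lin] by simp
  ultimately obtain Z e where Ze: "finite Z" "e > 0" "{g. \<forall>z\<in>Z. \<bar>g z - 0 z\<bar> < e} \<subseteq> {\<psi>. \<Lambda> \<psi> \<in> ball 0 1}"
    by (rule open_fun_contains_box[THEN exE]) blast
  have "\<Lambda> \<psi> = 0" if "\<forall>z\<in>Z. \<psi> z = 0" for \<psi>
  proof (rule ccontr)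
    assume "\<Lambda> \<psi> \<noteq> 0"
    have "(2 / \<bar>\<Lambda> \<psi>\<bar>) *\<^sub>R \<psi> \<in> {g. \<forall>z\<in>Z. \<bar>g z - 0 z\<bar> < e}" using that Ze(2) by simp
    then have "(2 / \<bar>\<Lambda> \<psi>\<bar>) *\<^sub>R \<psi> \<in> {\<psi>. \<Lambda> \<psi> \<in> ball 0 1}" by (rule subsetD[OF Ze(3)])
    then have "\<bar>\<Lambda> ((2 / \<bar>\<Lambda> \<psi>\<bar>) *\<^sub>R \<psi>)\<bar> < 1" by simp
    then show False using \<open>\<Lambda> \<psi> \<noteq> 0\<close> linear_scale[OF lin] by (simp add: abs_mult)
  qed
  with Ze(1) show ?thesis by blast
qed

lemma sum_fun_apply: "(\<Sum>i\<in>A. f i) x = (\<Sum>i\<in>A. f i x)"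
  by (induction A rule: infinite_finite_induct) auto

lemma continuous_linear_fun_eq_sum:
  fixes \<Lambda> :: "('b \<Rightarrow> real) \<Rightarrow> real"
  assumes lin: "linear \<Lambda>" and cont: "continuous_map euclidean euclideanreal \<Lambda>"
  shows "\<exists>Z a. finite Z \<and> (\<forall>\<psi>. \<Lambda> \<psi> = (\<Sum>z\<in>Z. a z * \<psi> z))"
proof -
  obtain Z where Z: "finite Z" "\<forall>\<psi>. (\<forall>z\<in>Z. \<psi> z = 0) \<longrightarrow> \<Lambda> \<psi> = 0"
    using continuous_linear_fun_finite_support[OF lin cont] by blast
  define e where "e z = (\<lambda>u::'b. if u = z then 1 else 0 :: real)" for z
  have "\<Lambda> \<psi> = (\<Sum>z\<in>Z. \<Lambda> (e z) * \<psi> z)" for \<psi>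
  proof -
    define \<phi> where "\<phi> = (\<Sum>z\<in>Z. \<psi> z *\<^sub>R e z)"
    have \<phi>: "\<phi> u = \<psi> u" if "u \<in> Z" for u
    proof -
      have "\<phi> u = (\<Sum>z\<in>Z. \<psi> z * e z u)" unfolding \<phi>_def sum_fun_apply by simp
      also have "\<dots> = (\<Sum>z\<in>Z. if z = u then \<psi> z else 0)" by (intro sum.cong) (auto simp: e_def)
      also have "\<dots> = \<psi> u" using that Z(1) by (simp add: sum.delta')
      finally show ?thesis .
    qed
    have "\<Lambda> (\<psi> - \<phi>) = 0" using \<phi> by (intro Z(2)[rule_format]) auto
    then have "\<Lambda> \<psi> = \<Lambda> \<phi>" using linear_diff[OF lin] by simp
    also have "\<Lambda> \<phi> = (\<Sum>z\<in>Z. \<psi> z * \<Lambda> (e z))"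
      unfolding \<phi>_def by (simp add: linear_sum[OF lin] linear_scale[OF lin])
    finally show ?thesis by (simp add: mult.commute)
  qed
  with Z(1) show ?thesis by (intro exI[of _ Z] exI[of _ "\<lambda>z. \<Lambda> (e z)"] conjI allI)
qed

lemma fconvex_dual: "fconvex (dual \<tau>)"
  unfolding fconvex_def dual_def
proof (intro ballI allI impI CollectI conjI; elim CollectE conjE)
  fix \<phi> \<psi> :: "'a \<Rightarrow> real" and u :: real
  assume "linear \<phi>" "continuous_map \<tau> euclideanreal \<phi>" "linear \<psi>" "continuous_map \<tau> euclideanreal \<psi>"
  then show "linear (\<lambda>x. (1 - u) * \<phi> x + u * \<psi> x)"
    by (intro linearI) (simp_all add: linear_add linear_scale algebra_simps)
  show "continuous_map \<tau> euclideanreal (\<lambda>x. (1 - u) * \<phi> x + u * \<psi> x)"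
    using \<open>continuous_map \<tau> euclideanreal \<phi>\<close> \<open>continuous_map \<tau> euclideanreal \<psi>\<close>
    by (intro continuous_map_add continuous_map_real_mult_left)
qed

lemma fconvex_halfspace: "fconvex {\<psi>. \<psi> v \<le> M}"
  unfolding fconvex_def
proof (intro ballI allI impI CollectI; elim CollectE)
  fix \<phi> \<psi> :: "'a \<Rightarrow> real" and u :: real
  assume "\<phi> v \<le> M" "\<psi> v \<le> M" "0 \<le> u \<and> u \<le> 1"
  then have "(1 - u) * \<phi> v \<le> (1 - u) * M" "u * \<psi> v \<le> u * M" by (auto intro: mult_left_mono)
  then show "(1 - u) * \<phi> v + u * \<psi> v \<le> M" by (simp add: algebra_simps)
qed

lemma fconv_hull_minimal: "A \<subseteq> C \<Longrightarrow> fconvex C \<Longrightarrow> fconv_hull A \<subseteq> C"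
  unfolding fconv_hull_def by blast

lemma fconv_hull_superset: "A \<subseteq> fconv_hull A"
  unfolding fconv_hull_def by blast

lemma convex_fconv_hull: "convex (fconv_hull A)"
  unfolding convex_alt
proof (intro ballI allI impI)
  fix p q and u :: real assume "p \<in> fconv_hull A" "q \<in> fconv_hull A" "0 \<le> u \<and> u \<le> 1"
  then have "(\<lambda>x. (1 - u) * p x + u * q x) \<in> fconv_hull A"
    unfolding fconv_hull_def fconvex_def by blast
  moreover have "(1 - u) *\<^sub>R p + u *\<^sub>R q = (\<lambda>x. (1 - u) * p x + u * q x)" by (auto simp: fun_eq_iff)
  ultimately show "(1 - u) *\<^sub>R p + u *\<^sub>R q \<in> fconv_hull A" by simp
qed

lemma wstar_clco_eq:
  assumes "A \<subseteq> dual \<tau>"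
  shows "wstar_clco \<tau> A = dual \<tau> \<inter> euclidean closure_of (fconv_hull A)"
  using fconv_hull_minimal[OF assms fconvex_dual]
  unfolding wstar_clco_def wstar_def closure_of_subtopology by (simp add: Int_absorb1)

lemma wstar_clco_halfspace:
  assumes "A \<subseteq> dual \<tau>" "\<And>c. c \<in> A \<Longrightarrow> c v \<le> M" "c \<in> wstar_clco \<tau> A"
  shows "c v \<le> M"
proof -
  have "closedin euclidean {\<psi> \<in> topspace euclidean. (\<lambda>\<psi>::'a \<Rightarrow> real. \<psi> v) \<psi> \<in> {..M}}"
    by (rule closedin_continuous_map_preimage[OF continuous_map_evaluation]) simp
  moreover have "fconv_hull A \<subseteq> {\<psi>. \<psi> v \<le> M}"
    using assms(2) by (intro fconv_hull_minimal fconvex_halfspace) auto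
  ultimately have "euclidean closure_of (fconv_hull A) \<subseteq> {\<psi>. \<psi> v \<le> M}"
    by (intro closure_of_minimal) auto
  then show ?thesis using assms(3) wstar_clco_eq[OF assms(1)] by auto
qed

lemma wstar_clco_separation:
  assumes A: "A \<subseteq> dual \<tau>" and q: "q \<in> dual \<tau>" "q \<notin> wstar_clco \<tau> A"
  shows "\<exists>w \<alpha>. (\<forall>c\<in>wstar_clco \<tau> A. c w \<le> \<alpha>) \<and> \<alpha> < q w"
proof -
  have "q \<notin> euclidean closure_of (fconv_hull A)" using q wstar_clco_eq[OF A] by blast
  then obtain U where U: "open U" "q \<in> U" "U \<inter> fconv_hull A = {}"
    unfolding in_closure_of by auto
  obtain Z e where Ze: "finite Z" "e > 0" "{g. \<forall>z\<in>Z. \<bar>g z - q z\<bar> < e} \<subseteq> U"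
    using open_fun_contains_box[OF U(1,2)] by blast
  let ?V = "{g::'a \<Rightarrow> real. \<forall>z\<in>Z. \<bar>g z - 0 z\<bar> < e}"
  have "q + v \<in> U" if "v \<in> ?V" for v
  proof -
    have "q + v \<in> {g. \<forall>z\<in>Z. \<bar>g z - q z\<bar> < e}" using that by simp
    then show ?thesis using Ze(3) by blast
  qed
  then have disj: "\<forall>k\<in>fconv_hull A. \<forall>v\<in>?V. q + v \<noteq> k" using U(3) by blast
  have V: "openin euclidean ?V" "convex ?V" "0 \<in> ?V"
    using open_fun_box[OF Ze(1), of 0 e] convex_fun_box[of Z 0 e] Ze(2) by simp_all
  obtain \<Lambda> \<alpha> where L: "linear \<Lambda>" "continuous_map euclidean euclideanreal \<Lambda>"
    "\<forall>k\<in>fconv_hull A. \<Lambda> k \<le> \<alpha>" "\<alpha> < \<Lambda> q"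
    using lctvs_separation[OF lctvs_fun convex_fconv_hull V disj] by blast
  obtain Z' a where "finite Z'" "\<forall>\<psi>. \<Lambda> \<psi> = (\<Sum>z\<in>Z'. a z * \<psi> z)"
    using continuous_linear_fun_eq_sum[OF L(1,2)] by blast
  then have eval: "\<Lambda> \<psi> = \<psi> (\<Sum>z\<in>Z'. a z *\<^sub>R z)" if "\<psi> \<in> dual \<tau>" for \<psi>
    using that by (simp add: dual_def linear_sum linear_scale)
  have "c (\<Sum>z\<in>Z'. a z *\<^sub>R z) \<le> \<alpha>" if "c \<in> A" for c
  proof -
    have "c (\<Sum>z\<in>Z'. a z *\<^sub>R z) = \<Lambda> c" using eval[of c] A that by auto
    also have "\<Lambda> c \<le> \<alpha>" using L(3) fconv_hull_superset[of A] that by blast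
    finally show ?thesis .
  qed
  then have "c (\<Sum>z\<in>Z'. a z *\<^sub>R z) \<le> \<alpha>" if "c \<in> wstar_clco \<tau> A" for c
    by (rule wstar_clco_halfspace[OF A _ that])
  then show ?thesis using L(4) eval[OF q(1)] by auto
qed

definition ereal_epigraph :: "('a \<Rightarrow> ereal) \<Rightarrow> ('a \<times> real) set" where
  "ereal_epigraph g = {(y, r). g y \<le> ereal r}"

lemma ereal_epigraph_convexD:
  assumes "convex (ereal_epigraph g)" "g y1 \<le> ereal r1" "g y2 \<le> ereal r2" "0 \<le> u" "u \<le> 1"
  shows "g ((1 - u) *\<^sub>R y1 + u *\<^sub>R y2) \<le> ereal ((1 - u) * r1 + u * r2)"
proof -
  have "(1 - u) *\<^sub>R (y1, r1) + u *\<^sub>R (y2, r2) \<in> ereal_epigraph g"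
    using assms by (intro convexD) (auto simp: ereal_epigraph_def)
  then show ?thesis by (simp add: ereal_epigraph_def)
qed

lemma convex_ereal_epigraph_if_econvex:
  assumes "econvex F"
  shows "convex (ereal_epigraph F)"
  unfolding convex_alt
proof (intro ballI allI impI)
  fix p q and u :: real
  assume "p \<in> ereal_epigraph F" "q \<in> ereal_epigraph F" and u: "0 \<le> u \<and> u \<le> 1"
  moreover obtain y1 r1 where p: "p = (y1, r1)" by (cases p)
  moreover obtain y2 r2 where q: "q = (y2, r2)" by (cases q)
  ultimately have "F y1 \<le> ereal r1" "F y2 \<le> ereal r2" by (simp_all add: ereal_epigraph_def)
  have "F ((1 - u) *\<^sub>R y1 + u *\<^sub>R y2) \<le> ereal (1 - u) * F y1 + ereal u * F y2"
    using assms u unfolding econvex_def by blast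
  also have "\<dots> \<le> ereal (1 - u) * ereal r1 + ereal u * ereal r2"
    using u \<open>F y1 \<le> ereal r1\<close> \<open>F y2 \<le> ereal r2\<close> by (intro add_mono ereal_mult_left_mono) auto
  finally show "(1 - u) *\<^sub>R p + u *\<^sub>R q \<in> ereal_epigraph F" by (simp add: p q ereal_epigraph_def)
qed

lemma ereal_scale_le_iff: "e > 0 \<Longrightarrow> ereal e * a \<le> ereal r \<longleftrightarrow> a \<le> ereal (r / e)"
  using ereal_le_divide_pos[of "ereal e" a "ereal r"] by simp

lemma convex_ereal_epigraph_scale:
  assumes "convex (ereal_epigraph g)" "e > 0"
  shows "convex (ereal_epigraph (\<lambda>z. ereal e * g z))"
proof -
  have "ereal_epigraph (\<lambda>z. ereal e * g z) = (\<lambda>(y, r). (y, e * r)) ` ereal_epigraph g"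
  proof (intro set_eqI iffI)
    fix p assume "p \<in> ereal_epigraph (\<lambda>z. ereal e * g z)"
    then have "(fst p, snd p / e) \<in> ereal_epigraph g" "p = (fst p, e * (snd p / e))"
      using ereal_scale_le_iff[OF assms(2)] assms(2) by (auto simp: ereal_epigraph_def)
    then show "p \<in> (\<lambda>(y, r). (y, e * r)) ` ereal_epigraph g"
      by (intro image_eqI[where x="(fst p, snd p / e)"]) simp_all
  next
    fix p assume "p \<in> (\<lambda>(y, r). (y, e * r)) ` ereal_epigraph g"
    then show "p \<in> ereal_epigraph (\<lambda>z. ereal e * g z)"
      using ereal_scale_le_iff[OF assms(2)] assms(2) by (auto simp: ereal_epigraph_def)
  qed
  moreover have "linear (\<lambda>(y::'a, r::real). (y, e * r))" by (rule linearI) (auto simp: algebra_simps)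
  ultimately show ?thesis using convex_linear_image[OF _ assms(1)] by simp
qed

lemma elsc_scale:
  assumes "elsc \<tau> F" "e > 0"
  shows "elsc \<tau> (\<lambda>z. ereal e * F z)"
  unfolding elsc_def
proof
  fix c
  have "{x \<in> topspace \<tau>. ereal e * F x \<le> c} = {x \<in> topspace \<tau>. F x \<le> c / ereal e}"
    using ereal_le_divide_pos[of "ereal e" _ c] assms(2) by auto
  then show "closedin \<tau> {x \<in> topspace \<tau>. ereal e * F x \<le> c}"
    using assms(1) unfolding elsc_def by simp
qed

lemma closedin_ereal_epigraph:
  assumes "elsc \<tau> g" "topspace \<tau> = UNIV"
  shows "closedin (prod_topology \<tau> euclideanreal) (ereal_epigraph g)"
  unfolding closedin_def
proof
  show "ereal_epigraph g \<subseteq> topspace (prod_topology \<tau> euclideanreal)" using assms(2) by simp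
  show "openin (prod_topology \<tau> euclideanreal) (topspace (prod_topology \<tau> euclideanreal) - ereal_epigraph g)"
    unfolding openin_prod_topology_alt
  proof (intro allI impI)
    fix y r assume "(y, r) \<in> topspace (prod_topology \<tau> euclideanreal) - ereal_epigraph g"
    then have "ereal r < g y" by (auto simp: ereal_epigraph_def)
    then obtain c where c: "ereal r < ereal c" "ereal c < g y" using ereal_dense2 by blast
    define U where "U = topspace \<tau> - {x \<in> topspace \<tau>. g x \<le> ereal c}"
    have "openin \<tau> U" unfolding U_def using assms(1) unfolding elsc_def by blast
    moreover have "openin euclideanreal {s. s < c}" by (simp add: open_Collect_less)
    moreover have "y \<in> U" using c assms(2) by (auto simp: U_def)
    moreover have "r \<in> {s. s < c}" using c by simp
    moreover have "U \<times> {s. s < c} \<subseteq> topspace (prod_topology \<tau> euclideanreal) - ereal_epigraph g"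
    proof
      fix p assume "p \<in> U \<times> {s. s < c}"
      then have "ereal c < g (fst p)" "snd p < c" by (auto simp: U_def)
      then have "ereal (snd p) < g (fst p)" by (meson ereal_less_eq(3) le_less_trans less_imp_le not_le)
      then show "p \<in> topspace (prod_topology \<tau> euclideanreal) - ereal_epigraph g"
        using assms(2) by (auto simp: ereal_epigraph_def case_prod_beta)
    qed
    ultimately show "\<exists>U V. openin \<tau> U \<and> openin euclideanreal V \<and> y \<in> U \<and> r \<in> V \<and>
        U \<times> V \<subseteq> topspace (prod_topology \<tau> euclideanreal) - ereal_epigraph g"
      by blast
  qed
qed

lemma dsubdiff_of_separating_functional:
  assumes \<psi>: "\<psi> \<in> dual \<tau>" and b: "b > 0" and gx: "g x = ereal a"
    and below: "\<And>y r. g y \<le> ereal r \<Longrightarrow> \<psi> y - r * b \<le> \<alpha>"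
    and above: "\<alpha> < \<psi> x - (a - \<delta>) * b"
  shows "(\<lambda>y. \<psi> y / b) \<in> dsubdiff \<tau> \<delta> g x"
proof -
  have lin: "linear \<psi>" and cont: "continuous_map \<tau> euclideanreal \<psi>"
    using \<psi> by (auto simp: dual_def)
  have "linear (\<lambda>y. \<psi> y / b)"
    by (rule linearI) (simp_all add: linear_add[OF lin] linear_scale[OF lin] add_divide_distrib)
  moreover have "continuous_map \<tau> euclideanreal (\<lambda>y. \<psi> y / b)"
    unfolding divide_inverse by (rule continuous_map_real_mult_right[OF cont])
  moreover have "g x + ereal (\<psi> (y - x) / b - \<delta>) \<le> g y" for y
  proof (cases "g y")
    case (real r)
    have "\<psi> y - r * b \<le> \<alpha>" using below[of y r] real by simp
    moreover have "\<psi> (y - x) = \<psi> y - \<psi> x" by (rule linear_diff[OF lin])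
    ultimately have "\<psi> (y - x) < (r - a + \<delta>) * b" using above by (simp add: algebra_simps)
    then have "\<psi> (y - x) / b < r - a + \<delta>" using b by (simp add: divide_less_eq)
    then show ?thesis using real gx by simp
  next
    case PInf
    then show ?thesis by simp
  next
    case MInf
    have "\<psi> y - ((\<psi> y - \<alpha>) / b - 1) * b \<le> \<alpha>" using below[of y "(\<psi> y - \<alpha>) / b - 1"] MInf by simp
    moreover have "\<psi> y - ((\<psi> y - \<alpha>) / b - 1) * b = \<alpha> + b" using b by (simp add: field_simps)
    ultimately show ?thesis using b by simp
  qed
  ultimately show ?thesis unfolding dsubdiff_def dual_def using gx by simp
qed

lemma linear_bounded_along_ray:
  assumes lin: "linear \<psi>" and b: "b > 0"
    and below: "\<And>s. s \<ge> 0 \<Longrightarrow> \<psi> (x - s *\<^sub>R w) - (a - N * s) * b \<le> \<alpha>"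
  shows "N \<le> \<psi> w / b"
proof (rule ccontr)
  assume "\<not> N \<le> \<psi> w / b"
  then have d: "N * b - \<psi> w > 0" using b by (simp add: field_simps)
  define s where "s = (\<bar>\<alpha> - \<psi> x + a * b\<bar> + 1) / (N * b - \<psi> w)"
  have "s \<ge> 0" using d s_def by simp
  moreover have "\<psi> (x - s *\<^sub>R w) = \<psi> x - s * \<psi> w" using linear_diff[OF lin] linear_scale[OF lin] by simp
  ultimately have "s * (N * b - \<psi> w) \<le> \<alpha> - \<psi> x + a * b" using below[of s] by (simp add: algebra_simps)
  moreover have "s * (N * b - \<psi> w) = \<bar>\<alpha> - \<psi> x + a * b\<bar> + 1" using d s_def by simp
  ultimately show False by simp
qed

lemma dual_fst_of_continuous_linear:
  assumes "linear \<Lambda>" "continuous_map (prod_topology \<tau> euclideanreal) euclideanreal \<Lambda>"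
    "topspace \<tau> = UNIV"
  shows "(\<lambda>y. \<Lambda> (y, 0)) \<in> dual \<tau>"
proof -
  have "linear (\<lambda>y. \<Lambda> (y, 0))"
  proof (rule linearI)
    show "\<Lambda> (y + z, 0) = \<Lambda> (y, 0) + \<Lambda> (z, 0)" for y z
      using linear_add[OF assms(1), of "(y, 0)" "(z, 0)"] by simp
    show "\<Lambda> (c *\<^sub>R y, 0) = c *\<^sub>R \<Lambda> (y, 0)" for c y
      using linear_scale[OF assms(1), of c "(y, 0)"] by simp
  qed
  moreover have "continuous_map \<tau> (prod_topology \<tau> euclideanreal) (\<lambda>y. (y, 0))"
    using assms(3) by (intro continuous_map_pairedI) auto
  then have "continuous_map \<tau> euclideanreal (\<lambda>y. \<Lambda> (y, 0))"
    using continuous_map_compose[OF _ assms(2)] by (simp add: o_def)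
  ultimately show ?thesis by (simp add: dual_def)
qed

lemma separation_from_epigraph_minus_ray:
  fixes \<tau> :: "'a::real_vector topology" and g :: "'a \<Rightarrow> ereal"
  assumes \<tau>: "lctvs \<tau>" and gc: "convex (ereal_epigraph g)"
    and V: "openin (prod_topology \<tau> euclideanreal) V" "convex V" "0 \<in> V"
    and dj: "\<And>v y r s. v \<in> V \<Longrightarrow> g y \<le> ereal r \<Longrightarrow> s \<ge> 0 \<Longrightarrow> p + v \<noteq> (y - s *\<^sub>R w, r - N * s)"
  shows "\<exists>\<Lambda> \<alpha>. linear \<Lambda> \<and> continuous_map (prod_topology \<tau> euclideanreal) euclideanreal \<Lambda>
    \<and> (\<forall>y r s. g y \<le> ereal r \<longrightarrow> s \<ge> 0 \<longrightarrow> \<Lambda> (y - s *\<^sub>R w, r - N * s) \<le> \<alpha>) \<and> \<alpha> < \<Lambda> p"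
proof -
  define f where "f = (\<lambda>((y, r), s). (y - s *\<^sub>R w, r - N * s :: real))"
  define K where "K = f ` (ereal_epigraph g \<times> {0..})"
  have K: "(y - s *\<^sub>R w, r - N * s) \<in> K" if "g y \<le> ereal r" "s \<ge> 0" for y r s
  proof -
    have "((y, r), s) \<in> ereal_epigraph g \<times> {0..}" using that by (simp add: ereal_epigraph_def)
    then show ?thesis unfolding K_def by (rule rev_image_eqI) (simp add: f_def)
  qed
  have "linear f"
    unfolding f_def by (rule linearI) (auto simp: algebra_simps case_prod_beta)
  moreover have "convex (ereal_epigraph g \<times> {0::real..})" using gc by (rule convex_Times) simp
  ultimately have "convex K" unfolding K_def by (rule convex_linear_image)
  have disj: "\<forall>k\<in>K. \<forall>v\<in>V. p + v \<noteq> k"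
  proof (intro ballI)
    fix k v assume "k \<in> K" "v \<in> V"
    from \<open>k \<in> K\<close> obtain y r s where "g y \<le> ereal r" "s \<ge> 0" "k = (y - s *\<^sub>R w, r - N * s)"
      unfolding K_def f_def ereal_epigraph_def by auto
    then show "p + v \<noteq> k" using dj[OF \<open>v \<in> V\<close>] by simp
  qed
  from lctvs_separation[OF lctvs_prod[OF \<tau>] \<open>convex K\<close> V disj]
  obtain \<Lambda> \<alpha> where "linear \<Lambda>" "continuous_map (prod_topology \<tau> euclideanreal) euclideanreal \<Lambda>"
    "\<forall>k\<in>K. \<Lambda> k \<le> \<alpha>" "\<alpha> < \<Lambda> p"
    by blast
  then show ?thesis using K by blast
qed

lemma dsubdiff_exists_ge:
  fixes \<tau> :: "'a::real_vector topology" and g :: "'a \<Rightarrow> ereal"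
  assumes \<tau>: "lctvs \<tau>" and gc: "convex (ereal_epigraph g)" and gx: "g x = ereal a" and \<delta>: "\<delta> > 0"
    and V: "openin (prod_topology \<tau> euclideanreal) V" "convex V" "0 \<in> V"
    and dj: "\<And>v y r s. v \<in> V \<Longrightarrow> g y \<le> ereal r \<Longrightarrow> s \<ge> 0 \<Longrightarrow> (x, a - \<delta>) + v \<noteq> (y - s *\<^sub>R w, r - N * s)"
  shows "\<exists>c \<in> dsubdiff \<tau> \<delta> g x. N \<le> c w"
proof -
  from separation_from_epigraph_minus_ray[OF \<tau> gc V dj]
  obtain \<Lambda> \<alpha> where L: "linear \<Lambda>" "continuous_map (prod_topology \<tau> euclideanreal) euclideanreal \<Lambda>"
    "\<forall>y r s. g y \<le> ereal r \<longrightarrow> s \<ge> 0 \<longrightarrow> \<Lambda> (y - s *\<^sub>R w, r - N * s) \<le> \<alpha>" "\<alpha> < \<Lambda> (x, a - \<delta>)"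
    by blast
  define \<psi> where "\<psi> y = \<Lambda> (y, 0)" for y
  define b where "b = - \<Lambda> (0, 1)"
  have split: "\<Lambda> (y, r) = \<psi> y - r * b" for y r
    using linear_add[OF L(1), of "(y, 0)" "r *\<^sub>R (0, 1)"] linear_scale[OF L(1), of r "(0, 1)"]
    by (simp add: \<psi>_def b_def)
  have below: "\<psi> (y - s *\<^sub>R w) - (r - N * s) * b \<le> \<alpha>" if "g y \<le> ereal r" "s \<ge> 0" for y r s
    using L(3)[rule_format, OF that] split[of "y - s *\<^sub>R w" "r - N * s"] by linarith
  have above: "\<alpha> < \<psi> x - (a - \<delta>) * b" using L(4) split[of x "a - \<delta>"] by simp
  have "\<psi> x - a * b \<le> \<alpha>" using below[of x a 0] gx by simp
  then have "0 < \<delta> * b" using above by (simp add: algebra_simps)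
  then have "b > 0" using \<delta> by (simp add: zero_less_mult_iff)
  have \<psi>: "\<psi> \<in> dual \<tau>"
    unfolding \<psi>_def using L(1,2) lctvs_topspace[OF \<tau>] by (rule dual_fst_of_continuous_linear)
  have "\<psi> y - r * b \<le> \<alpha>" if "g y \<le> ereal r" for y r using below[OF that, of 0] by simp
  with \<psi> \<open>b > 0\<close> gx have sub: "(\<lambda>y. \<psi> y / b) \<in> dsubdiff \<tau> \<delta> g x"
    using above by (rule dsubdiff_of_separating_functional)
  have ray: "\<psi> (x - s *\<^sub>R w) - (a - N * s) * b \<le> \<alpha>" if "s \<ge> 0" for s
    using below[of x a s] gx that by simp
  have "linear \<psi>" using \<psi> by (simp add: dual_def)
  then have "N \<le> \<psi> w / b" using \<open>b > 0\<close> ray by (rule linear_bounded_along_ray)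
  with sub show ?thesis by (intro bexI[where x="\<lambda>y. \<psi> y / b"]) simp_all
qed

lemma dsubdiff_nonempty:
  assumes \<tau>: "lctvs \<tau>" and gc: "convex (ereal_epigraph g)" and gl: "elsc \<tau> g"
    and gx: "g x = ereal a" and \<delta>: "\<delta> > 0"
  shows "dsubdiff \<tau> \<delta> g x \<noteq> {}"
proof -
  let ?P = "prod_topology \<tau> euclideanreal"
  have closed: "closedin ?P (ereal_epigraph g)"
    using gl lctvs_topspace[OF \<tau>] by (rule closedin_ereal_epigraph)
  have compact: "compactin ?P {(x, a - \<delta>)}" using \<tau> by simp
  have disj: "{(x, a - \<delta>)} \<inter> ereal_epigraph g = {}" using gx \<delta> by (simp add: ereal_epigraph_def)
  from lctvs_compact_nhd_avoiding[OF lctvs_prod[OF \<tau>] compact closed disj]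
  obtain V where V: "openin ?P V" "convex V" "0 \<in> V" "\<forall>v\<in>V. (x, a - \<delta>) + v \<notin> ereal_epigraph g"
    by blast
  have "\<exists>c \<in> dsubdiff \<tau> \<delta> g x. 0 \<le> c 0"
  proof (rule dsubdiff_exists_ge[OF \<tau> gc gx \<delta> V(1-3)])
    fix v y r and s :: real assume "v \<in> V" "g y \<le> ereal r"
    then show "(x, a - \<delta>) + v \<noteq> (y - s *\<^sub>R 0, r - 0 * s)"
      using V(4) by (auto simp: ereal_epigraph_def)
  qed
  then show ?thesis by blast
qed

lemma ereal_epigraph_shrink:
  assumes gc: "convex (ereal_epigraph g)" and gx: "g x = ereal a" and \<delta>: "\<delta> > 0"
    and y: "g y \<le> ereal r" and s: "s \<ge> 1" and eq: "(x, a - \<delta>) + v = (y - s *\<^sub>R w, r - N * s)"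
  shows "(x + w, a + N) + (1 / s) *\<^sub>R v \<in> ereal_epigraph g"
proof -
  obtain v1 v2 where v: "v = (v1, v2)" by (cases v)
  have "x + v1 = y - s *\<^sub>R w" "a - \<delta> + v2 = r - N * s" using eq v by simp_all
  then have y': "y = x + s *\<^sub>R w + v1" and r': "r = a - \<delta> + N * s + v2"
    by (auto simp: eq_diff_eq algebra_simps)
  define u where "u = 1 / s"
  have u: "0 \<le> u" "u \<le> 1" "u * s = 1" using s by (auto simp: u_def)
  have "g ((1 - u) *\<^sub>R x + u *\<^sub>R y) \<le> ereal ((1 - u) * a + u * r)"
    using ereal_epigraph_convexD[OF gc _ y u(1,2)] gx by simp
  moreover have "(1 - u) *\<^sub>R x + u *\<^sub>R y = x + w + u *\<^sub>R v1"
    using u(3) by (simp add: y' algebra_simps)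
  moreover have "(1 - u) * a + u * r \<le> a + N + u * v2"
    using u(1,3) \<delta> by (simp add: r' algebra_simps)
  ultimately have "g (x + w + u *\<^sub>R v1) \<le> ereal (a + N + u * v2)"
    by (metis ereal_less_eq(3) order_trans)
  then show ?thesis by (simp add: ereal_epigraph_def v u_def)
qed

lemma dsubdiff_unbounded:
  fixes \<tau> :: "'a::real_vector topology" and g :: "'a \<Rightarrow> ereal"
  assumes \<tau>: "lctvs \<tau>" and gc: "convex (ereal_epigraph g)" and gl: "elsc \<tau> g"
    and gx: "g x = ereal a" and \<delta>: "\<delta> > 0" and inf: "\<And>s. s > 0 \<Longrightarrow> g (x + s *\<^sub>R w) = \<infinity>"
  shows "\<exists>c \<in> dsubdiff \<tau> \<delta> g x. N \<le> c w"
proof -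
  let ?P = "prod_topology \<tau> euclideanreal"
  define \<gamma> where "\<gamma> s = (x + s *\<^sub>R w, a - \<delta> + N * s)" for s :: real
  define \<Sigma> where "\<Sigma> = \<gamma> ` {0..1} \<union> {(x + w, a + N)}"
  have "continuous_map euclideanreal \<tau> (\<lambda>s. s *\<^sub>R w + x)"
    using continuous_map_compose[OF lctvs_continuous_ray[OF \<tau>] lctvs_continuous_translation[OF \<tau>]]
    by (simp add: o_def)
  then have "continuous_map euclideanreal ?P \<gamma>"
    unfolding \<gamma>_def by (intro continuous_map_pairedI) (auto simp: add.commute intro: continuous_intros)
  then have compact: "compactin ?P \<Sigma>"
    unfolding \<Sigma>_def using \<tau> by (intro compactin_Un image_compactin) auto
  have closed: "closedin ?P (ereal_epigraph g)"
    using gl lctvs_topspace[OF \<tau>] by (rule closedin_ereal_epigraph)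
  have "\<gamma> s \<notin> ereal_epigraph g" if "s \<in> {0..1}" for s
    using that gx \<delta> inf by (cases "s = 0") (auto simp: \<gamma>_def ereal_epigraph_def)
  moreover have "(x + w, a + N) \<notin> ereal_epigraph g" using inf[of 1] by (simp add: ereal_epigraph_def)
  ultimately have disj: "\<Sigma> \<inter> ereal_epigraph g = {}" unfolding \<Sigma>_def by blast
  from lctvs_compact_nhd_avoiding[OF lctvs_prod[OF \<tau>] compact closed disj]
  obtain V where V: "openin ?P V" "convex V" "0 \<in> V" "\<forall>p\<in>\<Sigma>. \<forall>v\<in>V. p + v \<notin> ereal_epigraph g"
    by blast
  show ?thesis
  proof (rule dsubdiff_exists_ge[OF \<tau> gc gx \<delta> V(1-3)])
    fix v y r and s :: real assume v: "v \<in> V" and y: "g y \<le> ereal r" and s: "s \<ge> 0"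
    show "(x, a - \<delta>) + v \<noteq> (y - s *\<^sub>R w, r - N * s)"
    proof
      assume eq: "(x, a - \<delta>) + v = (y - s *\<^sub>R w, r - N * s)"
      show False
      proof (cases "s \<le> 1")
        case True
        have "\<gamma> s + v = (y, r)" using eq by (simp add: \<gamma>_def prod_eq_iff algebra_simps)
        then have "\<gamma> s + v \<in> ereal_epigraph g" using y by (simp add: ereal_epigraph_def)
        moreover have "\<gamma> s \<in> \<Sigma>" unfolding \<Sigma>_def using s True by simp
        ultimately show False using V(4) v by blast
      next
        case False
        have "(x + w, a + N) + (1 / s) *\<^sub>R v \<in> ereal_epigraph g"
          using ereal_epigraph_shrink[OF gc gx \<delta> y _ eq] False by simp
        moreover have "(1 / s) *\<^sub>R v \<in> V" using convex_scaleR_mem[OF V(2,3) v] False by simp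
        moreover have "(x + w, a + N) \<in> \<Sigma>" unfolding \<Sigma>_def by simp
        ultimately show False using V(4) by blast
      qed
    qed
  qed
qed

lemma dual_lincomb:
  assumes "\<phi> \<in> dual \<tau>" "\<psi> \<in> dual \<tau>"
  shows "(\<lambda>z. a * \<phi> z + b * \<psi> z) \<in> dual \<tau>"
proof -
  have lin: "linear \<phi>" "linear \<psi>" and cont: "continuous_map \<tau> euclideanreal \<phi>" "continuous_map \<tau> euclideanreal \<psi>"
    using assms by (auto simp: dual_def)
  have "linear (\<lambda>z. a * \<phi> z + b * \<psi> z)"
    by (rule linearI) (simp_all add: linear_add[OF lin(1)] linear_add[OF lin(2)]
        linear_scale[OF lin(1)] linear_scale[OF lin(2)] algebra_simps)
  moreover have "continuous_map \<tau> euclideanreal (\<lambda>z. a * \<phi> z + b * \<psi> z)"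
    using cont by (intro continuous_map_add continuous_map_real_mult_left)
  ultimately show ?thesis by (simp add: dual_def)
qed

lemma rec_cone_mem_dual:
  assumes "C \<subseteq> dual \<tau>" "c \<in> C" "d \<in> rec_cone C"
  shows "d \<in> dual \<tau>"
proof -
  have "\<forall>l\<ge>0. (\<lambda>x. c x + l * d x) \<in> C" using assms(2,3) unfolding rec_cone_def by blast
  from spec[OF this, of 1] have "(\<lambda>x. c x + d x) \<in> C" by simp
  then have "(\<lambda>z. c z + d z) \<in> dual \<tau>" "c \<in> dual \<tau>" using assms(1,2) by auto
  from dual_lincomb[OF this, of 1 "-1"] show ?thesis by simp
qed

lemma rec_cone_le_zero:
  assumes "c \<in> C" "d \<in> rec_cone C" "\<And>c. c \<in> C \<Longrightarrow> c v \<le> M"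
  shows "d v \<le> 0"
proof (rule ccontr)
  assume "\<not> d v \<le> 0"
  define l where "l = (\<bar>M\<bar> + \<bar>c v\<bar> + 1) / d v"
  have "l \<ge> 0" using \<open>\<not> d v \<le> 0\<close> l_def by simp
  moreover have "\<forall>l\<ge>0. (\<lambda>x. c x + l * d x) \<in> C" using assms(1,2) unfolding rec_cone_def by blast
  ultimately have "(\<lambda>z. c z + l * d z) \<in> C" by blast
  then have "c v + l * d v \<le> M" using assms(3) by fastforce
  moreover have "l * d v = \<bar>M\<bar> + \<bar>c v\<bar> + 1" using \<open>\<not> d v \<le> 0\<close> l_def by simp
  ultimately show False by simp
qed

lemma econvex_segment_le_max:
  assumes "econvex F" "F x \<le> ereal a" "F (x + s1 *\<^sub>R w) \<le> ereal n" "0 < s" "s \<le> s1"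
  shows "F (x + s *\<^sub>R w) \<le> ereal (max a n)"
proof -
  define u where "u = s / s1"
  have u: "0 \<le> u" "u \<le> 1" "u * s1 = s" using assms(4,5) by (auto simp: u_def)
  have "F ((1 - u) *\<^sub>R x + u *\<^sub>R (x + s1 *\<^sub>R w)) \<le> ereal ((1 - u) * a + u * n)"
    using ereal_epigraph_convexD[OF convex_ereal_epigraph_if_econvex[OF assms(1)] assms(2,3) u(1,2)] .
  moreover have "(1 - u) *\<^sub>R x + u *\<^sub>R (x + s1 *\<^sub>R w) = x + s *\<^sub>R w"
    using u(3) by (simp add: algebra_simps)
  moreover have "(1 - u) * a + u * n \<le> max a n"
    using u(1,2) convex_bound_le[of a "max a n" n "1 - u" u] by simp
  ultimately show ?thesis by (metis ereal_less_eq(3) order_trans)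
qed

lemma SUP_ereal_bounded:
  assumes "(SUP t\<in>T. ereal (h t)) < \<infinity>"
  shows "\<exists>D. \<forall>t\<in>T. h t \<le> D"
proof (cases "T = {}")
  case False
  then obtain t0 where "t0 \<in> T" by blast
  then have "ereal (h t0) \<le> (SUP t\<in>T. ereal (h t))" by (rule SUP_upper)
  with assms obtain D where "(SUP t\<in>T. ereal (h t)) = ereal D" by (cases "SUP t\<in>T. ereal (h t)") auto
  then show ?thesis using SUP_upper[of _ T "\<lambda>t. ereal (h t)"] by (intro exI[of _ D]) auto
qed simp

lemma INF_ereal_bounded:
  assumes "(INF t\<in>T. ereal (h t)) > -\<infinity>"
  shows "\<exists>m. \<forall>t\<in>T. m \<le> h t"
proof (cases "T = {}")
  case False
  then obtain t0 where "t0 \<in> T" by blast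
  then have "(INF t\<in>T. ereal (h t)) \<le> ereal (h t0)" by (rule INF_lower)
  with assms obtain m where "(INF t\<in>T. ereal (h t)) = ereal m" by (cases "INF t\<in>T. ereal (h t)") auto
  then show ?thesis using INF_lower[of _ T "\<lambda>t. ereal (h t)"] by (intro exI[of _ m]) auto
qed simp

lemma wstar_clco_subset_dual: "A \<subseteq> dual \<tau> \<Longrightarrow> wstar_clco \<tau> A \<subseteq> dual \<tau>"
  using wstar_clco_eq by blast

lemma subset_wstar_clco:
  assumes "A \<subseteq> dual \<tau>"
  shows "A \<subseteq> wstar_clco \<tau> A"
  using fconv_hull_superset[of A] closure_of_subset[of "fconv_hull A" euclidean]
    wstar_clco_eq[OF assms] assms by auto

locale sup_of_convex_family =
  fixes \<tau> :: "'a::real_vector topology" and S :: "'i topology"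
    and F :: "'i \<Rightarrow> 'a \<Rightarrow> ereal" and eps \<delta> :: "'i \<Rightarrow> real" and x :: 'a
  assumes lctvs: "lctvs \<tau>"
    and nonempty: "topspace S \<noteq> {}"
    and compact: "compact_space S"
    and usc: "\<And>z. eusc_on S (\<lambda>t. F t z)"
    and convex: "\<And>t. t \<in> topspace S \<Longrightarrow> econvex (F t)"
    and proper: "\<And>t. t \<in> topspace S \<Longrightarrow> eproper (F t)"
    and lsc: "\<And>t. t \<in> topspace S \<Longrightarrow> elsc \<tau> (F t)"
    and x_dom: "x \<in> edom (\<lambda>z. SUP t\<in>topspace S. F t z)"
    and eps: "\<And>t. t \<in> topspace S \<Longrightarrow> 0 < eps t \<and> eps t \<le> 1"
    and eps_inf: "(INF t\<in>topspace S. ereal (eps t) * F t x) > -\<infinity>"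
    and \<delta>_pos: "\<And>t. t \<in> topspace S \<Longrightarrow> \<delta> t > 0"
    and \<delta>_sup: "(SUP t\<in>topspace S. ereal (\<delta> t)) < \<infinity>"
begin

abbreviation T where "T \<equiv> topspace S"
abbreviation f where "f \<equiv> \<lambda>z. SUP t\<in>T. F t z"
abbreviation g where "g t \<equiv> \<lambda>z. ereal (eps t) * F t z"
abbreviation A where "A \<equiv> \<Union>t\<in>T. dsubdiff \<tau> (\<delta> t) (g t) x"

lemma F_le_f: "t \<in> T \<Longrightarrow> F t z \<le> f z"
  by (rule SUP_upper)

lemma F_real_if_dom:
  assumes "y \<in> edom f" "t \<in> T"
  shows "F t y = ereal (real_of_ereal (F t y))"
proof -
  have "F t y \<noteq> \<infinity>" using F_le_f[OF assms(2), of y] assms(1) by (auto simp: edom_def)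
  moreover have "F t y \<noteq> -\<infinity>" using proper[OF assms(2)] by (auto simp: eproper_def)
  ultimately show ?thesis by (cases "F t y") auto
qed

lemma g_x: "t \<in> T \<Longrightarrow> g t x = ereal (eps t * real_of_ereal (F t x))"
  by (subst F_real_if_dom[OF x_dom]) simp_all

lemma convex_epigraph_g: "t \<in> T \<Longrightarrow> convex (ereal_epigraph (g t))"
  using convex_ereal_epigraph_scale[OF convex_ereal_epigraph_if_econvex[OF convex]] eps by blast

lemma elsc_g: "t \<in> T \<Longrightarrow> elsc \<tau> (g t)"
  using elsc_scale[OF lsc] eps by blast

lemma A_subset_dual: "A \<subseteq> dual \<tau>"
  by (auto simp: dsubdiff_def split: if_splits)

lemma A_nonempty: "A \<noteq> {}"
proof -
  obtain t where "t \<in> T" using nonempty by blast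
  then show ?thesis
    using dsubdiff_nonempty[OF lctvs convex_epigraph_g elsc_g g_x \<delta>_pos] by blast
qed

lemma dsubdiff_le_on_dom:
  assumes c: "c \<in> dsubdiff \<tau> (\<delta> t) (g t) x" and t: "t \<in> T" and y: "y \<in> edom f"
  shows "c (y - x) \<le> eps t * real_of_ereal (F t y) - eps t * real_of_ereal (F t x) + \<delta> t"
proof -
  have "g t x + ereal (c (y - x) - \<delta> t) \<le> g t y"
    using c g_x[OF t] unfolding dsubdiff_def by auto
  moreover have "g t y = ereal (eps t * real_of_ereal (F t y))"
    by (subst F_real_if_dom[OF y t]) simp_all
  ultimately show ?thesis using g_x[OF t] by simp
qed

lemma eps_F_le_f:
  assumes y: "y \<in> edom f" and t: "t \<in> T"
  shows "eps t * real_of_ereal (F t y) \<le> max 0 (real_of_ereal (f y))"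
proof -
  obtain b where b: "f y = ereal b" using y F_le_f[OF t, of y] F_real_if_dom[OF y t]
    by (cases "f y") (auto simp: edom_def)
  then have "real_of_ereal (F t y) \<le> b"
    using F_le_f[OF t, of y] F_real_if_dom[OF y t] by (metis ereal_less_eq(3))
  moreover have "0 < eps t" "eps t \<le> 1" using eps[OF t] by auto
  ultimately show ?thesis
    using mult_left_le_one_le[of "real_of_ereal (F t y)" "eps t"] mult_pos_neg[of "eps t" "real_of_ereal (F t y)"]
    by (cases "real_of_ereal (F t y) \<ge> 0") (auto simp: b)
qed

lemma A_bounded_on_dom:
  assumes y: "y \<in> edom f"
  shows "\<exists>M. \<forall>c\<in>A. c (y - x) \<le> M"
proof -
  have "(INF t\<in>T. ereal (eps t) * F t x) = (INF t\<in>T. ereal (eps t * real_of_ereal (F t x)))"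
    by (rule INF_cong[OF refl g_x])
  with eps_inf have "(INF t\<in>T. ereal (eps t * real_of_ereal (F t x))) > -\<infinity>" by simp
  from INF_ereal_bounded[OF this] obtain m where m: "\<forall>t\<in>T. m \<le> eps t * real_of_ereal (F t x)"
    by blast
  from SUP_ereal_bounded[OF \<delta>_sup] obtain D where D: "\<forall>t\<in>T. \<delta> t \<le> D" by blast
  have "c (y - x) \<le> max 0 (real_of_ereal (f y)) - m + D" if "c \<in> A" for c
  proof -
    from that obtain t where t: "t \<in> T" "c \<in> dsubdiff \<tau> (\<delta> t) (g t) x" by blast
    show ?thesis
      using dsubdiff_le_on_dom[OF t(2) t(1) y] eps_F_le_f[OF y t(1)] m D t(1) by fastforce
  qed
  then show ?thesis by blast
qed

lemma rec_cone_subset_normal_cone: "rec_cone (wstar_clco \<tau> A) \<subseteq> normal_cone \<tau> (edom f) x"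
proof
  fix d assume d: "d \<in> rec_cone (wstar_clco \<tau> A)"
  obtain c0 where "c0 \<in> A" using A_nonempty by blast
  then have c0: "c0 \<in> wstar_clco \<tau> A" using subset_wstar_clco[OF A_subset_dual] by blast
  have "d (y - x) \<le> 0" if y: "y \<in> edom f" for y
  proof -
    obtain M where "\<forall>c\<in>A. c (y - x) \<le> M" using A_bounded_on_dom[OF y] by blast
    then have "c (y - x) \<le> M" if "c \<in> wstar_clco \<tau> A" for c
      using wstar_clco_halfspace[OF A_subset_dual _ that] by blast
    then show ?thesis using rec_cone_le_zero[OF c0 d] by blast
  qed
  moreover have "d \<in> dual \<tau>" using rec_cone_mem_dual[OF wstar_clco_subset_dual[OF A_subset_dual] c0 d] .
  ultimately show "d \<in> normal_cone \<tau> (edom f) x" by (simp add: normal_cone_def)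
qed

lemma f_x: "f x = ereal (real_of_ereal (f x))"
proof -
  obtain t where "t \<in> T" using nonempty by blast
  then have "f x \<noteq> -\<infinity>" using F_le_f[of t x] F_real_if_dom[OF x_dom] by force
  moreover have "f x \<noteq> \<infinity>" using x_dom by (simp add: edom_def)
  ultimately show ?thesis by (cases "f x") auto
qed

lemma F_finite_on_ray:
  assumes A: "\<And>c. c \<in> A \<Longrightarrow> c w \<le> \<alpha>" and t: "t \<in> T"
  shows "\<exists>s>0. F t (x + s *\<^sub>R w) < \<infinity>"
proof (rule ccontr)
  assume "\<not> (\<exists>s>0. F t (x + s *\<^sub>R w) < \<infinity>)"
  then have "g t (x + s *\<^sub>R w) = \<infinity>" if "s > 0" for s
    using that eps[OF t] by (auto simp: less_top)
  then have "\<exists>c \<in> dsubdiff \<tau> (\<delta> t) (g t) x. \<alpha> + 1 \<le> c w"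
    by (rule dsubdiff_unbounded[OF lctvs convex_epigraph_g[OF t] elsc_g[OF t] g_x[OF t] \<delta>_pos[OF t]])
  then obtain c where c: "c \<in> dsubdiff \<tau> (\<delta> t) (g t) x" "\<alpha> + 1 \<le> c w" by blast
  have "c w \<le> \<alpha>" using A c(1) t by blast
  with c(2) show False by simp
qed

lemma finite_ray_subcover:
  assumes ray: "\<And>t. t \<in> T \<Longrightarrow> \<exists>s>0. F t (x + s *\<^sub>R w) < \<infinity>"
  shows "\<exists>T0 st nt. finite T0 \<and> T0 \<subseteq> T \<and> T0 \<noteq> {} \<and> (\<forall>t\<in>T0. st t > 0)
    \<and> (\<forall>t'\<in>T. \<exists>t\<in>T0. F t' (x + st t *\<^sub>R w) < ereal (nt t))"
proof -
  have "\<forall>t\<in>T. \<exists>p::real \<times> real. fst p > 0 \<and> F t (x + fst p *\<^sub>R w) < ereal (snd p)"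
  proof
    fix t assume "t \<in> T"
    then obtain s where "s > 0" "F t (x + s *\<^sub>R w) < \<infinity>" using ray by blast
    then obtain n where "F t (x + s *\<^sub>R w) < ereal n" using ereal_dense2 by blast
    then show "\<exists>p::real \<times> real. fst p > 0 \<and> F t (x + fst p *\<^sub>R w) < ereal (snd p)"
      using \<open>s > 0\<close> by (intro exI[of _ "(s, n)"]) simp
  qed
  from bchoice[OF this] obtain p
    where p: "\<forall>t\<in>T. fst (p t) > 0 \<and> F t (x + fst (p t) *\<^sub>R w) < ereal (snd (p t))"
    by blast
  define U where "U t = {t' \<in> T. F t' (x + fst (p t) *\<^sub>R w) < ereal (snd (p t))}" for t
  have "openin S (U t)" for t
  proof -
    have "closedin S {t' \<in> T. ereal (snd (p t)) \<le> F t' (x + fst (p t) *\<^sub>R w)}"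
      using usc unfolding eusc_on_def by blast
    then have "openin S (T - {t' \<in> T. ereal (snd (p t)) \<le> F t' (x + fst (p t) *\<^sub>R w)})"
      by (rule openin_diff[OF openin_topspace])
    moreover have "T - {t' \<in> T. ereal (snd (p t)) \<le> F t' (x + fst (p t) *\<^sub>R w)} = U t"
      unfolding U_def by (auto simp: not_le)
    ultimately show ?thesis by simp
  qed
  moreover have "T \<subseteq> \<Union>(U ` T)" unfolding U_def using p by auto
  moreover have "compactin S T" using compact by (simp add: compact_space_def)
  ultimately obtain \<F> where \<F>: "finite \<F>" "\<F> \<subseteq> U ` T" "T \<subseteq> \<Union>\<F>"
    using compactinD[of S T "U ` T"] by blast
  then obtain T0 where T0: "T0 \<subseteq> T" "finite T0" "\<F> = U ` T0"
    using finite_subset_image by blast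
  have "T0 \<noteq> {}" using T0(3) \<F>(3) nonempty by auto
  moreover have "\<forall>t'\<in>T. \<exists>t\<in>T0. F t' (x + fst (p t) *\<^sub>R w) < ereal (snd (p t))"
    using T0(3) \<F>(3) unfolding U_def by blast
  ultimately show ?thesis using T0(1,2) p
    by (intro exI[of _ T0] exI[of _ "\<lambda>t. fst (p t)"] exI[of _ "\<lambda>t. snd (p t)"]) blast
qed

lemma ray_meets_dom:
  assumes ray: "\<And>t. t \<in> T \<Longrightarrow> \<exists>s>0. F t (x + s *\<^sub>R w) < \<infinity>"
  shows "\<exists>s>0. x + s *\<^sub>R w \<in> edom f"
proof -
  obtain T0 st nt where T0: "finite T0" "T0 \<subseteq> T" "T0 \<noteq> {}" "\<forall>t\<in>T0. st t > 0"
    and cover: "\<forall>t'\<in>T. \<exists>t\<in>T0. F t' (x + st t *\<^sub>R w) < ereal (nt t)"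
    using finite_ray_subcover[OF ray] by blast
  define s where "s = Min (st ` T0)"
  define n where "n = Max (nt ` T0)"
  define M where "M = max (real_of_ereal (f x)) n"
  have "s > 0" using T0 by (simp add: s_def)
  have "F t' (x + s *\<^sub>R w) \<le> ereal M" if t': "t' \<in> T" for t'
  proof -
    obtain t where t: "t \<in> T0" "F t' (x + st t *\<^sub>R w) < ereal (nt t)" using cover t' by blast
    have "s \<le> st t" "nt t \<le> n" using T0(1) t(1) by (simp_all add: s_def n_def)
    have "F t' x \<le> f x" by (rule F_le_f[OF t'])
    also have "f x = ereal (real_of_ereal (f x))" by (rule f_x)
    finally have Fx: "F t' x \<le> ereal (real_of_ereal (f x))" .
    have "F t' (x + st t *\<^sub>R w) \<le> ereal n"
      using t(2) \<open>nt t \<le> n\<close> by (meson ereal_less_eq(3) less_imp_le order_trans)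
    from econvex_segment_le_max[OF convex[OF t'] Fx this \<open>s > 0\<close> \<open>s \<le> st t\<close>]
    show ?thesis unfolding M_def .
  qed
  then have "f (x + s *\<^sub>R w) \<le> ereal M" by (rule SUP_least)
  moreover have "ereal M < \<infinity>" by simp
  ultimately have "f (x + s *\<^sub>R w) < \<infinity>" by (rule le_less_trans)
  then show ?thesis using \<open>s > 0\<close> by (auto simp: edom_def)
qed

lemma normal_cone_subset_rec_cone: "normal_cone \<tau> (edom f) x \<subseteq> rec_cone (wstar_clco \<tau> A)"
proof
  fix \<phi> assume "\<phi> \<in> normal_cone \<tau> (edom f) x"
  then have \<phi>: "\<phi> \<in> dual \<tau>" "\<And>y. y \<in> edom f \<Longrightarrow> \<phi> (y - x) \<le> 0"
    unfolding normal_cone_def by auto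
  have "(\<lambda>z. c z + l * \<phi> z) \<in> wstar_clco \<tau> A" if c: "c \<in> wstar_clco \<tau> A" and l: "l \<ge> 0" for c l
  proof (rule ccontr)
    assume notin: "(\<lambda>z. c z + l * \<phi> z) \<notin> wstar_clco \<tau> A"
    have "c \<in> dual \<tau>" using c wstar_clco_subset_dual[OF A_subset_dual] by blast
    from dual_lincomb[OF this \<phi>(1), of 1 l] have "(\<lambda>z. c z + l * \<phi> z) \<in> dual \<tau>" by simp
    from wstar_clco_separation[OF A_subset_dual this notin]
    obtain w \<alpha> where sep: "\<forall>c\<in>wstar_clco \<tau> A. c w \<le> \<alpha>" "\<alpha> < c w + l * \<phi> w" by auto
    have "c w \<le> \<alpha>" using sep(1) c by blast
    then have "0 < l * \<phi> w" using sep(2) by linarith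
    then have "\<phi> w > 0" using l by (simp add: zero_less_mult_iff)
    have "c' w \<le> \<alpha>" if "c' \<in> A" for c'
      using sep(1) subset_wstar_clco[OF A_subset_dual] that by blast
    then have "\<And>t. t \<in> T \<Longrightarrow> \<exists>s>0. F t (x + s *\<^sub>R w) < \<infinity>" by (rule F_finite_on_ray)
    from ray_meets_dom[OF this] obtain s where s: "s > 0" "x + s *\<^sub>R w \<in> edom f" by blast
    have "\<phi> (x + s *\<^sub>R w - x) = s * \<phi> w" using \<phi>(1) by (simp add: dual_def linear_scale)
    moreover have "s * \<phi> w > 0" using s(1) \<open>\<phi> w > 0\<close> by simp
    ultimately show False using \<phi>(2)[OF s(2)] by linarith
  qed
  then show "\<phi> \<in> rec_cone (wstar_clco \<tau> A)" unfolding rec_cone_def by blast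
qed

lemma normal_cone_eq: "normal_cone \<tau> (edom f) x = rec_cone (wstar_clco \<tau> A)"
  using normal_cone_subset_rec_cone rec_cone_subset_normal_cone by blast

end

theorem corollary4:
  fixes \<tau> :: "'a::real_vector topology"
    and S :: "'i topology"
    and F :: "'i \<Rightarrow> 'a \<Rightarrow> ereal"
    and eps \<delta> :: "'i \<Rightarrow> real"
    and x :: 'a
  assumes X: "lcs \<tau>"
    and T_ne: "topspace S \<noteq> {}"
    and SH_cpt: "compact_space S" and SH_haus: "Hausdorff_space S"
    and SH_usc: "\<And>z. eusc_on S (\<lambda>t. F t z)"
    and Fconv: "\<And>t. t \<in> topspace S \<Longrightarrow> econvex (F t)"
    and Fprop: "\<And>t. t \<in> topspace S \<Longrightarrow> eproper (F t)"
    and Flsc: "\<And>t. t \<in> topspace S \<Longrightarrow> elsc \<tau> (F t)"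
    and xdom: "x \<in> edom (\<lambda>z. SUP t\<in>topspace S. F t z)"
    and eps: "\<And>t. t \<in> topspace S \<Longrightarrow> 0 < eps t \<and> eps t \<le> 1"
    and eps_inf: "(INF t\<in>topspace S. ereal (eps t) * F t x) > -\<infinity>"
    and dpos: "\<And>t. t \<in> topspace S \<Longrightarrow> \<delta> t > 0"
    and dinf: "(INF t\<in>topspace S. ereal (\<delta> t)) > 0"
    and dsup: "(SUP t\<in>topspace S. ereal (\<delta> t)) < \<infinity>"
  shows "normal_cone \<tau> (edom (\<lambda>z. SUP t\<in>topspace S. F t z)) x
         = rec_cone (wstar_clco \<tau> (\<Union>t\<in>topspace S. dsubdiff \<tau> (\<delta> t) (\<lambda>z. ereal (eps t) * F t z) x))"
proof -
  interpret sup_of_convex_family \<tau> S F eps \<delta> x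
    by (rule sup_of_convex_family.intro[OF lctvs_if_lcs[OF X] T_ne SH_cpt SH_usc Fconv Fprop Flsc
          xdom eps eps_inf dpos dsup])
  show ?thesis by (rule normal_cone_eq)
qed

end
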